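(* Let $\mathcal{S}$ be a finite set, $\Pi=(\pi_{xy})$ an irreducible stochastic matrix on $\mathcal{S}$, $\kappa(x,y):=\pi_{xy}-\mathbf{1}_{x=y}$, and $Q=(q(y))$ the unique invariant distribution of $\Pi$ (so $q>0$). Let $X$ be the continuous-time Markov chain $X(t)=Z_{N(t)}$, where $(Z_n)$ is a Markov chain with transition matrix $\Pi$ and initial distribution $P(0)$ with all entries positive and $N$ is an independent rate-one Poisson process; let $p(t,y):=\mathbb{P}(X(t)=y)$ and $\ell(t,y):=p(t,y)/q(y)$. Let $\mathbb{Q}$ be a probability measure under which $X$ has the same transition dynamics but $X(0)$ has distribution $Q$. Set $\widehat\kappa(x,y):=q(y)\kappa(y,x)/q(x)$. Fix $T\in(0,\infty)$, put $\widehat X(s):=X(T-s)$ and $\widehat{\mathcal{G}}(s):=\sigma(\widehat X(u),\,0\le u\le s)$ for $0\le s\le T$. Then the process $\widehat M$ defined by $$\ell^2\big(T-s,\widehat X(s)\big)=\widehat M(s)+\int_0^s\sum_{y\neq x}\widehat\kappa(x,y)\big(\ell(t,y)-\ell(t,x)\big)^2\Big|_{t=T-u,\;x=\widehat X(u)}\,\mathrm{d}u,\qquad 0\le s\le T,$$ is a martingale with respect to the filtration $(\widehat{\mathcal{G}}(s))_{0\le s\le T}$ under $\mathbb{Q}$.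
   Context: $\ell(t,\cdot)$ is the likelihood ratio of the time-$t$ law of the chain with respect to its invariant distribution; $\widehat\kappa$ are the transition rates of the time-reversed stationary chain. *)

theory Defs
  imports "HOL-Probability.Probability"
begin

definition stochastic_matrix :: "('s::finite \<Rightarrow> 's \<Rightarrow> real) \<Rightarrow> bool" where
  "stochastic_matrix Pm \<longleftrightarrow> (\<forall>x y. 0 \<le> Pm x y) \<and> (\<forall>x. (\<Sum>y\<in>UNIV. Pm x y) = 1)"

definition irreducible_matrix :: "('s \<Rightarrow> 's \<Rightarrow> real) \<Rightarrow> bool" where
  "irreducible_matrix Pm \<longleftrightarrow> (\<forall>x y. (x, y) \<in> {(a, b). 0 < Pm a b}\<^sup>*)"

definition prob_vector :: "('s::finite \<Rightarrow> real) \<Rightarrow> bool" where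
  "prob_vector p \<longleftrightarrow> (\<forall>x. 0 \<le> p x) \<and> (\<Sum>x\<in>UNIV. p x) = 1"

definition invariant_distribution :: "('s::finite \<Rightarrow> 's \<Rightarrow> real) \<Rightarrow> ('s \<Rightarrow> real) \<Rightarrow> bool" where
  "invariant_distribution Pm q \<longleftrightarrow> prob_vector q \<and> (\<forall>y. (\<Sum>x\<in>UNIV. q x * Pm x y) = q y)"

definition kappa :: "('s \<Rightarrow> 's \<Rightarrow> real) \<Rightarrow> 's \<Rightarrow> 's \<Rightarrow> real" where
  "kappa Pm x y = Pm x y - (if x = y then 1 else 0)"

definition kappa_hat :: "('s \<Rightarrow> 's \<Rightarrow> real) \<Rightarrow> ('s \<Rightarrow> real) \<Rightarrow> 's \<Rightarrow> 's \<Rightarrow> real" where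
  "kappa_hat Pm q x y = q y * kappa Pm y x / q x"

definition markov_chain_on :: "'w measure \<Rightarrow> (nat \<Rightarrow> 'w \<Rightarrow> 's) \<Rightarrow> ('s \<Rightarrow> real) \<Rightarrow> ('s \<Rightarrow> 's \<Rightarrow> real) \<Rightarrow> bool" where
  "markov_chain_on M Z p0 Pm \<longleftrightarrow>
     (\<forall>n. Z n \<in> measurable M (count_space UNIV)) \<and>
     (\<forall>n (xs :: nat \<Rightarrow> 's). measure M {\<omega> \<in> space M. \<forall>i\<le>n. Z i \<omega> = xs i}
                              = p0 (xs 0) * (\<Prod>i<n. Pm (xs i) (xs (Suc i))))"

definition rate_one_poisson_process :: "'w measure \<Rightarrow> (real \<Rightarrow> 'w \<Rightarrow> nat) \<Rightarrow> bool" where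
  "rate_one_poisson_process M N \<longleftrightarrow>
     (\<forall>t\<ge>0. N t \<in> measurable M (count_space UNIV)) \<and>
     (\<forall>\<omega>\<in>space M. N 0 \<omega> = 0 \<and> mono_on {0..} (\<lambda>t. N t \<omega>) \<and>
         (\<forall>t\<ge>0. \<forall>\<^sub>F s in at_right t. N s \<omega> = N t \<omega>)) \<and>
     (\<forall>s t (k::nat). 0 \<le> s \<longrightarrow> s \<le> t \<longrightarrow>
         measure M {\<omega> \<in> space M. N t \<omega> - N s \<omega> = k} = (t - s) ^ k / fact k * exp (- (t - s))) \<and>
     (\<forall>n (ts :: nat \<Rightarrow> real). 0 \<le> ts 0 \<longrightarrow> (\<forall>i<n. ts i \<le> ts (Suc i)) \<longrightarrow>
         prob_space.indep_vars M (\<lambda>_. count_space UNIV) (\<lambda>i \<omega>. N (ts (Suc i)) \<omega> - N (ts i) \<omega>) {..<n})"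

definition uniformized_chain_setting ::
  "'w measure \<Rightarrow> (nat \<Rightarrow> 'w \<Rightarrow> 's) \<Rightarrow> (real \<Rightarrow> 'w \<Rightarrow> nat) \<Rightarrow> ('s \<Rightarrow> real) \<Rightarrow> ('s \<Rightarrow> 's \<Rightarrow> real) \<Rightarrow> bool" where
  "uniformized_chain_setting M Z N p0 Pm \<longleftrightarrow>
     prob_space M \<and> markov_chain_on M Z p0 Pm \<and> rate_one_poisson_process M N \<and>
     prob_space.indep_set M
        (sigma_sets (space M) {{\<omega> \<in> space M. Z n \<omega> = x} | n x. True})
        (sigma_sets (space M) {{\<omega> \<in> space M. N t \<omega> = k} | t k. 0 \<le> t})"

definition ctmc :: "(nat \<Rightarrow> 'w \<Rightarrow> 's) \<Rightarrow> (real \<Rightarrow> 'w \<Rightarrow> nat) \<Rightarrow> real \<Rightarrow> 'w \<Rightarrow> 's" where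
  "ctmc Z N t \<omega> = Z (N t \<omega>) \<omega>"

definition lratio :: "'w measure \<Rightarrow> (nat \<Rightarrow> 'w \<Rightarrow> 's) \<Rightarrow> (real \<Rightarrow> 'w \<Rightarrow> nat) \<Rightarrow> ('s \<Rightarrow> real) \<Rightarrow> real \<Rightarrow> 's \<Rightarrow> real" where
  "lratio P Z N q t y = measure P {\<omega> \<in> space P. ctmc Z N t \<omega> = y} / q y"

definition natural_filtration :: "'w measure \<Rightarrow> (real \<Rightarrow> 'w \<Rightarrow> 's) \<Rightarrow> real \<Rightarrow> 'w measure" where
  "natural_filtration M Y s =
     sigma (space M) {{\<omega> \<in> space M. Y u \<omega> = y} | u y. 0 \<le> u \<and> u \<le> s}"

definition martingale :: "'w measure \<Rightarrow> (real \<Rightarrow> 'w measure) \<Rightarrow> real set \<Rightarrow> (real \<Rightarrow> 'w \<Rightarrow> real) \<Rightarrow> bool" where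
  "martingale M F I Y \<longleftrightarrow>
     (\<forall>s\<in>I. subalgebra M (F s) \<and> Y s \<in> borel_measurable (F s) \<and> integrable M (Y s)) \<and>
     (\<forall>s\<in>I. \<forall>t\<in>I. s \<le> t \<longrightarrow> sets (F s) \<subseteq> sets (F t)) \<and>
     (\<forall>s\<in>I. \<forall>t\<in>I. s \<le> t \<longrightarrow> (AE \<omega> in M. real_cond_exp M (F s) (Y t) \<omega> = Y s \<omega>))"

end

theory Submission
  imports Defs
begin

text \<open>Under \<open>Q\<close> the chain is stationary, so its time reversal is again a Markov chain, with rates
  \<open>kappa_hat\<close>. Hence, for a cylinder event \<open>A\<close> of the reversed path up to time \<open>s\<close>, the measure
  \<open>E\<^sub>Q[1\<^sub>A; X(v) = x]\<close> (for \<open>v \<le> T - s\<close>) is \<open>c w(v,x)\<close> with a weight \<open>w\<close> solving the adjoint equation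
  \<open>\<partial>\<^sub>v w = - w kappa_hat\<close>. On the other hand \<open>\<ell>(t) = p(t)/q\<close> solves \<open>\<partial>\<^sub>t \<ell> = kappa_hat \<ell>\<close>, and
  since the rows of \<open>kappa_hat\<close> sum to zero,
  \<open>\<partial>\<^sub>v \<Sum>\<^sub>x w(v,x) \<ell>(v,x)\<^sup>2 = - \<Sum>\<^sub>x w(v,x) \<Gamma>(v,x)\<close>, where \<open>\<Gamma>\<close> is the carre du champ of \<open>\<ell>\<close>, i.e. the integrand
  of the compensator. Integrating over \<open>v \<in> [T - t, T - s]\<close> gives \<open>E\<^sub>Q[1\<^sub>A (M(t) - M(s))] = 0\<close> on
  cylinders, and a \<open>\<pi>\<close>-\<open>\<lambda>\<close> argument extends this to the whole filtration.\<close>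

section \<open>The transition function of the uniformized chain\<close>

fun mat_pow :: "('s::finite \<Rightarrow> 's \<Rightarrow> real) \<Rightarrow> nat \<Rightarrow> 's \<Rightarrow> 's \<Rightarrow> real" where
  "mat_pow Pm 0 x y = (if x = y then 1 else 0)"
| "mat_pow Pm (Suc n) x y = (\<Sum>z\<in>UNIV. mat_pow Pm n x z * Pm z y)"

definition poisson_weight :: "real \<Rightarrow> nat \<Rightarrow> real" where
  "poisson_weight t k = t ^ k / fact k * exp (- t)"

definition mat_exp :: "('s::finite \<Rightarrow> 's \<Rightarrow> real) \<Rightarrow> real \<Rightarrow> 's \<Rightarrow> 's \<Rightarrow> real" where
  "mat_exp Pm t x y = (\<Sum>n. mat_pow Pm n x y / fact n * t ^ n)"

text \<open>\<open>exp (t \<kappa>) = exp (-t) exp (t \<Pi>)\<close>, i.e. the law of \<open>Z (N t)\<close> for the chain started in \<open>x\<close>.\<close>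
definition transition_fun :: "('s::finite \<Rightarrow> 's \<Rightarrow> real) \<Rightarrow> real \<Rightarrow> 's \<Rightarrow> 's \<Rightarrow> real" where
  "transition_fun Pm t x y = exp (- t) * mat_exp Pm t x y"

lemma sum_times_delta: "(\<Sum>z\<in>(UNIV::'s::finite set). f z * (if z = y then 1 else 0)) = (f y :: real)"
  by (subst sum.cong[OF refl, of _ _ "\<lambda>z. if z = y then f z else 0"]) auto

lemma sum_delta_times: "(\<Sum>z\<in>(UNIV::'s::finite set). (if y = z then 1 else 0) * f z) = (f y :: real)"
  by (subst sum.cong[OF refl, of _ _ "\<lambda>z. if z = y then f z else 0"]) auto

lemma mat_pow_Suc_left: "mat_pow Pm (Suc n) x y = (\<Sum>z\<in>UNIV. Pm x z * mat_pow Pm n z y)"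
proof (induction n arbitrary: y)
  case 0
  show ?case by (simp add: sum_times_delta sum_delta_times)
next
  case (Suc n)
  have "mat_pow Pm (Suc (Suc n)) x y = (\<Sum>w\<in>UNIV. \<Sum>z\<in>UNIV. Pm x z * (mat_pow Pm n z w * Pm w y))"
    using Suc by (simp add: sum_distrib_right mult.assoc)
  also have "\<dots> = (\<Sum>z\<in>UNIV. \<Sum>w\<in>UNIV. Pm x z * (mat_pow Pm n z w * Pm w y))"
    by (rule sum.swap)
  finally show ?case by (simp add: sum_distrib_left)
qed

lemma mat_pow_nonneg:
  assumes "stochastic_matrix Pm" shows "0 \<le> mat_pow Pm n x y"
  using assms by (induction n arbitrary: y) (auto simp: stochastic_matrix_def intro!: sum_nonneg)

lemma mat_pow_row_sum:
  assumes "stochastic_matrix Pm" shows "(\<Sum>y\<in>UNIV. mat_pow Pm n x y) = 1"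
proof (induction n)
  case (Suc n)
  have "(\<Sum>y\<in>UNIV. mat_pow Pm (Suc n) x y) = (\<Sum>z\<in>UNIV. \<Sum>y\<in>UNIV. mat_pow Pm n x z * Pm z y)"
    by (simp only: mat_pow.simps) (rule sum.swap)
  also have "\<dots> = (\<Sum>z\<in>UNIV. mat_pow Pm n x z)"
    using assms by (simp add: sum_distrib_left[symmetric] stochastic_matrix_def)
  finally show ?case using Suc by simp
qed simp

lemma abs_mat_pow_le_1:
  assumes "stochastic_matrix Pm" shows "\<bar>mat_pow Pm n x y\<bar> \<le> 1"
proof -
  have "mat_pow Pm n x y \<le> (\<Sum>y\<in>UNIV. mat_pow Pm n x y)"
    by (rule member_le_sum) (auto intro: mat_pow_nonneg[OF assms])
  then show ?thesis using mat_pow_row_sum[OF assms] mat_pow_nonneg[OF assms] by simp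
qed

lemma invariant_distribution_mat_pow:
  assumes "invariant_distribution Pm q"
  shows "(\<Sum>x\<in>UNIV. q x * mat_pow Pm n x y) = q y"
proof (induction n arbitrary: y)
  case 0
  show ?case by (simp add: sum_times_delta)
next
  case (Suc n)
  have "(\<Sum>x\<in>UNIV. q x * mat_pow Pm (Suc n) x y) = (\<Sum>x\<in>UNIV. \<Sum>z\<in>UNIV. q x * mat_pow Pm n x z * Pm z y)"
    by (simp add: sum_distrib_left mult.assoc)
  also have "\<dots> = (\<Sum>z\<in>UNIV. \<Sum>x\<in>UNIV. q x * mat_pow Pm n x z * Pm z y)"
    by (rule sum.swap)
  also have "\<dots> = (\<Sum>z\<in>UNIV. q z * Pm z y)"
    using Suc by (simp add: sum_distrib_right[symmetric])
  also have "\<dots> = q y" using assms by (simp add: invariant_distribution_def)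
  finally show ?case .
qed

lemma summable_bounded_exp_series:
  fixes c :: "nat \<Rightarrow> real"
  assumes "\<And>n. \<bar>c n\<bar> \<le> 1"
  shows "summable (\<lambda>n. c n / fact n * t ^ n)"
proof (rule summable_comparison_test[OF _ summable_exp[of "\<bar>t\<bar>"]])
  have "norm (c n / fact n * t ^ n) \<le> inverse (fact n) * \<bar>t\<bar> ^ n" for n
    using mult_right_mono[OF assms[of n], of "inverse (fact n) * \<bar>t\<bar> ^ n"]
    by (simp add: abs_mult power_abs divide_inverse)
  then show "\<exists>N. \<forall>n\<ge>N. norm (c n / fact n * t ^ n) \<le> inverse (fact n) * \<bar>t\<bar> ^ n"
    by blast
qed

lemma summable_mat_exp:
  assumes "stochastic_matrix Pm"
  shows "summable (\<lambda>n. mat_pow Pm n x y / fact n * t ^ n)"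
  by (rule summable_bounded_exp_series) (rule abs_mat_pow_le_1[OF assms])

lemma poisson_weight_sums_transition_fun:
  assumes "stochastic_matrix Pm"
  shows "(\<lambda>k. poisson_weight t k * mat_pow Pm k x y) sums transition_fun Pm t x y"
proof -
  have "(\<lambda>n. exp (-t) * (mat_pow Pm n x y / fact n * t ^ n)) sums (exp (-t) * mat_exp Pm t x y)"
    unfolding mat_exp_def by (rule sums_mult) (rule summable_sums[OF summable_mat_exp[OF assms]])
  then show ?thesis unfolding transition_fun_def poisson_weight_def by (simp add: field_simps)
qed

lemma mat_exp_derivative:
  assumes "stochastic_matrix Pm"
  shows "((\<lambda>t. mat_exp Pm t x y) has_real_derivative (\<Sum>z\<in>UNIV. mat_exp Pm t x z * Pm z y)) (at t)"
    and "((\<lambda>t. mat_exp Pm t x y) has_real_derivative (\<Sum>z\<in>UNIV. Pm x z * mat_exp Pm t z y)) (at t)"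
proof -
  define c where "c n = mat_pow Pm n x y / fact n" for n
  have "summable (\<lambda>n. c n * u ^ n)" for u
    unfolding c_def by (rule summable_mat_exp[OF assms])
  then have D: "((\<lambda>t. mat_exp Pm t x y) has_real_derivative (\<Sum>n. diffs c n * t ^ n)) (at t)"
    using termdiffs_strong_converges_everywhere[of c t] unfolding mat_exp_def c_def by simp
  have diffs_c: "diffs c n = mat_pow Pm (Suc n) x y / fact n" for n
    unfolding diffs_def c_def by (simp del: mat_pow.simps of_nat_Suc add: fact_Suc)
  have sm: "\<And>z. summable (\<lambda>n. mat_pow Pm n x z / fact n * t ^ n)"
           "\<And>z. summable (\<lambda>n. mat_pow Pm n z y / fact n * t ^ n)"
    by (rule summable_mat_exp[OF assms])+
  have "(\<Sum>n. diffs c n * t ^ n) = (\<Sum>n. \<Sum>z\<in>UNIV. (mat_pow Pm n x z / fact n * t ^ n) * Pm z y)"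
    unfolding diffs_c by (simp add: sum_distrib_left sum_distrib_right sum_divide_distrib mult_ac)
  also have "\<dots> = (\<Sum>z\<in>UNIV. \<Sum>n. (mat_pow Pm n x z / fact n * t ^ n) * Pm z y)"
    by (rule suminf_sum) (intro summable_mult2 sm)
  also have "\<dots> = (\<Sum>z\<in>UNIV. mat_exp Pm t x z * Pm z y)"
    unfolding mat_exp_def by (simp only: suminf_mult2[OF sm(1)])
  finally show "((\<lambda>t. mat_exp Pm t x y) has_real_derivative (\<Sum>z\<in>UNIV. mat_exp Pm t x z * Pm z y)) (at t)"
    using D by simp
  have "(\<Sum>n. diffs c n * t ^ n) = (\<Sum>n. \<Sum>z\<in>UNIV. Pm x z * (mat_pow Pm n z y / fact n * t ^ n))"
    unfolding diffs_c mat_pow_Suc_left by (simp add: sum_distrib_left sum_distrib_right sum_divide_distrib mult_ac)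
  also have "\<dots> = (\<Sum>z\<in>UNIV. \<Sum>n. Pm x z * (mat_pow Pm n z y / fact n * t ^ n))"
    by (rule suminf_sum) (intro summable_mult sm)
  also have "\<dots> = (\<Sum>z\<in>UNIV. Pm x z * mat_exp Pm t z y)"
    unfolding mat_exp_def by (simp only: suminf_mult[OF sm(2)])
  finally show "((\<lambda>t. mat_exp Pm t x y) has_real_derivative (\<Sum>z\<in>UNIV. Pm x z * mat_exp Pm t z y)) (at t)"
    using D by simp
qed

lemma transition_fun_derivative:
  assumes "stochastic_matrix Pm"
  shows forward_equation:
      "((\<lambda>t. transition_fun Pm t x y) has_real_derivative (\<Sum>z\<in>UNIV. transition_fun Pm t x z * kappa Pm z y)) (at t)"
    and backward_equation:
      "((\<lambda>t. transition_fun Pm t x y) has_real_derivative (\<Sum>z\<in>UNIV. kappa Pm x z * transition_fun Pm t z y)) (at t)"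
proof -
  have e: "((\<lambda>t. exp (- t)) has_real_derivative (- exp (- t))) (at t)"
    by (auto intro!: derivative_eq_intros)
  have k1: "(\<Sum>z\<in>UNIV. transition_fun Pm t x z * kappa Pm z y)
      = exp (-t) * (\<Sum>z\<in>UNIV. mat_exp Pm t x z * Pm z y) - transition_fun Pm t x y"
    by (simp add: kappa_def right_diff_distrib sum_subtractf sum_times_delta)
       (simp add: transition_fun_def sum_distrib_left mult_ac)
  have k2: "(\<Sum>z\<in>UNIV. kappa Pm x z * transition_fun Pm t z y)
      = exp (-t) * (\<Sum>z\<in>UNIV. Pm x z * mat_exp Pm t z y) - transition_fun Pm t x y"
    by (simp add: kappa_def left_diff_distrib sum_subtractf sum_delta_times)
       (simp add: transition_fun_def sum_distrib_left mult_ac)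
  show "((\<lambda>t. transition_fun Pm t x y) has_real_derivative (\<Sum>z\<in>UNIV. transition_fun Pm t x z * kappa Pm z y)) (at t)"
    unfolding k1 using DERIV_mult[OF e mat_exp_derivative(1)[OF assms, of x y t]]
    by (simp add: transition_fun_def fun_eq_iff algebra_simps)
  show "((\<lambda>t. transition_fun Pm t x y) has_real_derivative (\<Sum>z\<in>UNIV. kappa Pm x z * transition_fun Pm t z y)) (at t)"
    unfolding k2 using DERIV_mult[OF e mat_exp_derivative(2)[OF assms, of x y t]]
    by (simp add: transition_fun_def fun_eq_iff algebra_simps)
qed

lemma transition_fun_zero: "transition_fun Pm 0 x y = (if x = y then 1 else 0)"
proof -
  have "mat_exp Pm 0 x y = mat_pow Pm 0 x y / fact 0 * 0 ^ 0"
    unfolding mat_exp_def by (subst suminf_finite[of "{0}"]) auto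
  then show ?thesis by (simp add: transition_fun_def)
qed

lemma transition_fun_nonneg:
  assumes "stochastic_matrix Pm" "0 \<le> t" shows "0 \<le> transition_fun Pm t x y"
  unfolding transition_fun_def mat_exp_def
  by (intro mult_nonneg_nonneg suminf_nonneg summable_mat_exp[OF assms(1)])
     (auto intro!: mult_nonneg_nonneg divide_nonneg_nonneg mat_pow_nonneg[OF assms(1)] simp: assms(2))

lemma invariant_distribution_transition_fun:
  assumes "stochastic_matrix Pm" "invariant_distribution Pm q"
  shows "(\<Sum>x\<in>UNIV. q x * transition_fun Pm t x y) = q y"
proof -
  have "(\<Sum>x\<in>UNIV. q x * mat_exp Pm t x y) = (\<Sum>x\<in>UNIV. \<Sum>n. q x * (mat_pow Pm n x y / fact n * t ^ n))"
    unfolding mat_exp_def by (simp only: suminf_mult[OF summable_mat_exp[OF assms(1)]])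
  also have "\<dots> = (\<Sum>n. \<Sum>x\<in>UNIV. q x * (mat_pow Pm n x y / fact n * t ^ n))"
    by (rule suminf_sum[symmetric]) (intro summable_mult summable_mat_exp[OF assms(1)])
  also have "\<dots> = (\<Sum>n. q y * (inverse (fact n) * t ^ n))"
    by (simp add: sum_distrib_right[symmetric] mult.assoc[symmetric] sum_divide_distrib[symmetric]
        invariant_distribution_mat_pow[OF assms(2)] divide_inverse del: sum_distrib_right)
  also have "\<dots> = q y * exp t"
    using sums_mult[OF exp_converges[of t], of "q y"] by (simp add: sums_iff)
  finally have E: "(\<Sum>x\<in>UNIV. q x * mat_exp Pm t x y) = q y * exp t" .
  have "(\<Sum>x\<in>UNIV. q x * transition_fun Pm t x y) = exp (- t) * (\<Sum>x\<in>UNIV. q x * mat_exp Pm t x y)"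
    by (simp add: transition_fun_def sum_distrib_left mult_ac)
  then show ?thesis unfolding E by (simp add: exp_minus field_simps)
qed

section \<open>The uniformized chain and its Markov property\<close>

lemma sigma_sets_Collect_finite_All:
  assumes "G \<subseteq> Pow \<Omega>" "finite S" "\<And>i. i \<in> S \<Longrightarrow> {x\<in>\<Omega>. P i x} \<in> G"
  shows "{x\<in>\<Omega>. \<forall>i\<in>S. P i x} \<in> sigma_sets \<Omega> G"
proof -
  interpret sigma_algebra \<Omega> "sigma_sets \<Omega> G" using assms(1) by (rule sigma_algebra_sigma_sets)
  show ?thesis using assms(2,3) by (intro sets_Collect_finite_All) auto
qed

lemma Int_in_sigma_sets:
  assumes "G \<subseteq> Pow \<Omega>" "a \<in> sigma_sets \<Omega> G" "b \<in> sigma_sets \<Omega> G"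
  shows "a \<inter> b \<in> sigma_sets \<Omega> G"
proof -
  interpret sigma_algebra \<Omega> "sigma_sets \<Omega> G" using assms(1) by (rule sigma_algebra_sigma_sets)
  show ?thesis using assms(2,3) by (rule Int)
qed

lemma increasing_grid_nonneg:
  fixes \<tau> :: "nat \<Rightarrow> real"
  assumes "\<tau> 0 = 0" "\<forall>i<m. \<tau> i \<le> \<tau> (Suc i)" "i \<le> m"
  shows "0 \<le> \<tau> i"
  using assms(3)
proof (induction i)
  case (Suc i)
  then show ?case using assms(2) by (metis Suc_le_lessD less_imp_le_nat order_trans)
qed (use assms(1) in simp)

lemma finite_set_increasing_grid:
  fixes R :: "real set"
  assumes "finite R" "R \<subseteq> {0..}" "s \<in> R" "\<forall>r\<in>R. r \<le> s"
  obtains m \<tau> where "\<tau> 0 = 0" "\<forall>i<m. \<tau> i \<le> \<tau> (Suc i)" "\<tau> ` {1..m} = R" "\<tau> m = s"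
proof -
  define l where "l = sorted_list_of_set R"
  define \<tau> where "\<tau> i = (if i = 0 then 0 else l ! (i - 1))" for i
  have set_l: "set l = R" and sorted_l: "sorted l" using assms(1) by (auto simp: l_def)
  have L: "0 < length l" using assms(3) set_l by (metis length_pos_if_in_set)
  have image: "\<tau> ` {1..length l} = R"
  proof (intro equalityI subsetI)
    fix r assume "r \<in> \<tau> ` {1..length l}"
    then show "r \<in> R" using set_l by (auto simp: \<tau>_def)
  next
    fix r assume "r \<in> R"
    then obtain j where "j < length l" "l ! j = r" using set_l by (auto simp: in_set_conv_nth)
    then show "r \<in> \<tau> ` {1..length l}" by (intro image_eqI[of _ _ "Suc j"]) (auto simp: \<tau>_def)
  qed
  have "\<forall>i<length l. \<tau> i \<le> \<tau> (Suc i)"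
  proof (intro allI impI)
    fix i assume i: "i < length l"
    show "\<tau> i \<le> \<tau> (Suc i)"
    proof (cases "i = 0")
      case True
      then show ?thesis using i set_l assms(2) by (auto simp: \<tau>_def)
    next
      case False
      then show ?thesis using i sorted_l by (auto simp: \<tau>_def intro!: sorted_nth_mono)
    qed
  qed
  moreover have "\<tau> (length l) = s"
  proof -
    obtain k where k: "k < length l" "l ! k = s" using assms(3) set_l by (metis in_set_conv_nth)
    then have "s \<le> l ! (length l - 1)" using sorted_l by (auto intro: sorted_nth_mono)
    moreover have "l ! (length l - 1) \<le> s" using assms(4) set_l L by auto
    ultimately show ?thesis using L by (simp add: \<tau>_def)
  qed
  ultimately show thesis
    using that[of \<tau> "length l"] image by (simp add: \<tau>_def)
qed

locale uniformized_chain =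
  fixes M :: "'w measure" and Z :: "nat \<Rightarrow> 'w \<Rightarrow> 's::finite" and N :: "real \<Rightarrow> 'w \<Rightarrow> nat"
    and p0 :: "'s \<Rightarrow> real" and Pm :: "'s \<Rightarrow> 's \<Rightarrow> real"
  assumes setting: "uniformized_chain_setting M Z N p0 Pm"
    and stoch: "stochastic_matrix Pm"
begin

sublocale prob_space M using setting by (simp add: uniformized_chain_setting_def)

definition Z_events :: "'w set set" where
  "Z_events = {{\<omega> \<in> space M. Z n \<omega> = x} | n x. True}"

definition N_events :: "'w set set" where
  "N_events = {{\<omega> \<in> space M. N t \<omega> = k} | t k. 0 \<le> t}"

lemma indep_Z_N: "indep_set (sigma_sets (space M) Z_events) (sigma_sets (space M) N_events)"
  using setting by (simp add: uniformized_chain_setting_def Z_events_def N_events_def)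

lemma prob_Z_path: "prob {\<omega> \<in> space M. \<forall>i\<le>n. Z i \<omega> = xs i} = p0 (xs 0) * (\<Prod>i<n. Pm (xs i) (xs (Suc i)))"
  using setting by (simp add: uniformized_chain_setting_def markov_chain_on_def)

lemma poisson_process: "rate_one_poisson_process M N"
  using setting by (simp add: uniformized_chain_setting_def)

lemma measurable_Z[measurable]: "Z n \<in> measurable M (count_space UNIV)"
  using setting by (simp add: uniformized_chain_setting_def markov_chain_on_def)

lemma measurable_N: "0 \<le> t \<Longrightarrow> N t \<in> measurable M (count_space UNIV)"
  using poisson_process by (simp add: rate_one_poisson_process_def)

lemma measurable_X: "0 \<le> t \<Longrightarrow> ctmc Z N t \<in> measurable M (count_space UNIV)"
  unfolding ctmc_def
  by (rule measurable_compose_countable[where f="\<lambda>n \<omega>. Z n \<omega>" and g="N t"]) (auto intro: measurable_N)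

lemma N_zero: "\<omega> \<in> space M \<Longrightarrow> N 0 \<omega> = 0"
  using poisson_process by (simp add: rate_one_poisson_process_def)

lemma N_mono: "\<omega> \<in> space M \<Longrightarrow> 0 \<le> s \<Longrightarrow> s \<le> t \<Longrightarrow> N s \<omega> \<le> N t \<omega>"
  using poisson_process unfolding rate_one_poisson_process_def mono_on_def by auto

lemma N_right_constant: "\<omega> \<in> space M \<Longrightarrow> 0 \<le> t \<Longrightarrow> \<forall>\<^sub>F s in at_right t. N s \<omega> = N t \<omega>"
  using poisson_process by (simp add: rate_one_poisson_process_def)

lemma prob_N_increment:
  "0 \<le> s \<Longrightarrow> s \<le> t \<Longrightarrow> prob {\<omega> \<in> space M. N t \<omega> - N s \<omega> = k} = poisson_weight (t - s) k"
  using poisson_process by (simp add: rate_one_poisson_process_def poisson_weight_def)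

lemma indep_N_increments: "0 \<le> ts 0 \<Longrightarrow> (\<forall>i<n. ts i \<le> ts (Suc i)) \<Longrightarrow>
   indep_vars (\<lambda>_. count_space UNIV) (\<lambda>i \<omega>. N (ts (Suc i)) \<omega> - N (ts i) \<omega>) {..<n}"
  using poisson_process by (simp add: rate_one_poisson_process_def)

lemma sets_Z_event: "{\<omega> \<in> space M. Z n \<omega> = x} \<in> sets M"
  by measurable

lemma sets_N_event: "0 \<le> t \<Longrightarrow> {\<omega> \<in> space M. N t \<omega> = k} \<in> sets M"
  using measurable_sets[OF measurable_N, of t "{k}"] by (simp add: vimage_def Int_def conj_commute)

lemma sets_X_event: "0 \<le> t \<Longrightarrow> {\<omega> \<in> space M. ctmc Z N t \<omega> = k} \<in> sets M"
  using measurable_sets[OF measurable_X, of t "{k}"] by (simp add: vimage_def Int_def conj_commute)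

lemma Z_events_finite_All:
  "finite R \<Longrightarrow> {\<omega> \<in> space M. \<forall>r\<in>R. Z (g r) \<omega> = f r} \<in> sigma_sets (space M) Z_events"
  by (rule sigma_sets_Collect_finite_All) (auto simp: Z_events_def)

lemma N_events_finite_All:
  "finite R \<Longrightarrow> (\<And>r. r \<in> R \<Longrightarrow> 0 \<le> g r) \<Longrightarrow>
    {\<omega> \<in> space M. \<forall>r\<in>R. N (g r) \<omega> = f r} \<in> sigma_sets (space M) N_events"
  by (rule sigma_sets_Collect_finite_All) (auto simp: N_events_def)

lemma prob_N_Z_event:
  assumes "a \<in> sigma_sets (space M) N_events" "b \<in> sigma_sets (space M) Z_events"
  shows "prob (a \<inter> b) = prob a * prob b"
  using indep_setD[OF indep_Z_N assms(2,1)] by (simp add: Int_commute mult.commute)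

lemma prob_Z_in_sets_inter:
  assumes E: "E \<in> sets M"
  shows "prob ({\<omega> \<in> space M. \<forall>k\<le>m. Z k \<omega> \<in> S k} \<inter> E)
       = (\<Sum>xs\<in>PiE {..m} S. prob ({\<omega> \<in> space M. \<forall>k\<le>m. Z k \<omega> = xs k} \<inter> E))"
proof -
  define C where "C xs = {\<omega> \<in> space M. \<forall>k\<le>m. Z k \<omega> = xs k} \<inter> E" for xs
  have union: "{\<omega> \<in> space M. \<forall>k\<le>m. Z k \<omega> \<in> S k} \<inter> E = (\<Union>xs\<in>PiE {..m} S. C xs)"
  proof (intro equalityI subsetI)
    fix \<omega> assume "\<omega> \<in> {\<omega> \<in> space M. \<forall>k\<le>m. Z k \<omega> \<in> S k} \<inter> E"
    then have "restrict (\<lambda>k. Z k \<omega>) {..m} \<in> PiE {..m} S" "\<omega> \<in> C (restrict (\<lambda>k. Z k \<omega>) {..m})"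
      by (auto simp: C_def)
    then show "\<omega> \<in> (\<Union>xs\<in>PiE {..m} S. C xs)" by blast
  qed (auto simp: C_def PiE_def Pi_def)
  have disj: "disjoint_family_on C (PiE {..m} S)"
    unfolding disjoint_family_on_def
  proof (intro ballI impI)
    fix a b assume "a \<in> PiE {..m} S" "b \<in> PiE {..m} S" "a \<noteq> b"
    then obtain k where "k \<le> m" "a k \<noteq> b k" by (metis PiE_ext atMost_iff)
    then show "C a \<inter> C b = {}" by (auto simp: C_def)
  qed
  have sets_C: "C xs \<in> sets M" for xs
  proof -
    have "{\<omega> \<in> space M. \<forall>k\<in>{..m}. Z k \<omega> = xs k} \<in> sets M" by measurable
    then show ?thesis using E by (auto simp: C_def)
  qed
  have "prob (\<Union>xs\<in>PiE {..m} S. C xs) = (\<Sum>xs\<in>PiE {..m} S. prob (C xs))"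
    by (rule finite_measure_finite_Union) (use disj sets_C in \<open>auto intro: finite_PiE\<close>)
  then show ?thesis by (simp only: union C_def[abs_def])
qed

lemma prob_Z_step:
  assumes Sm: "S m \<subseteq> {z}"
  shows "prob {\<omega> \<in> space M. (\<forall>k\<le>m. Z k \<omega> \<in> S k) \<and> Z (Suc m) \<omega> = y}
       = prob {\<omega> \<in> space M. \<forall>k\<le>m. Z k \<omega> \<in> S k} * Pm z y"
proof -
  let ?path = "\<lambda>xs. {\<omega> \<in> space M. \<forall>k\<le>m. Z k \<omega> = xs k}"
  have step: "prob (?path xs \<inter> {\<omega> \<in> space M. Z (Suc m) \<omega> = y}) = prob (?path xs \<inter> space M) * Pm z y"
    if "xs \<in> PiE {..m} S" for xs
  proof -
    have "?path xs \<inter> {\<omega> \<in> space M. Z (Suc m) \<omega> = y} = {\<omega> \<in> space M. \<forall>i\<le>Suc m. Z i \<omega> = (xs(Suc m := y)) i}"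
      by (auto simp: le_Suc_eq)
    then show ?thesis
      using that Sm prob_Z_path[of m xs] prob_Z_path[of "Suc m" "xs(Suc m := y)"]
      by (auto simp: Int_absorb2)
  qed
  have "prob {\<omega> \<in> space M. (\<forall>k\<le>m. Z k \<omega> \<in> S k) \<and> Z (Suc m) \<omega> = y}
      = prob ({\<omega> \<in> space M. \<forall>k\<le>m. Z k \<omega> \<in> S k} \<inter> {\<omega> \<in> space M. Z (Suc m) \<omega> = y})"
    by (rule arg_cong[where f=prob]) auto
  also have "\<dots> = (\<Sum>xs\<in>PiE {..m} S. prob (?path xs \<inter> space M)) * Pm z y"
    by (simp add: prob_Z_in_sets_inter sets_Z_event step sum_distrib_right)
  also have "\<dots> = prob {\<omega> \<in> space M. \<forall>k\<le>m. Z k \<omega> \<in> S k} * Pm z y"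
    using prob_Z_in_sets_inter[OF sets.top, of m S] by (simp add: Int_absorb2)
  finally show ?thesis .
qed

lemma prob_Z_steps:
  assumes Sn: "S n \<subseteq> {x}"
  shows "prob {\<omega> \<in> space M. (\<forall>k\<le>n. Z k \<omega> \<in> S k) \<and> Z (n + j) \<omega> = y}
       = prob {\<omega> \<in> space M. \<forall>k\<le>n. Z k \<omega> \<in> S k} * mat_pow Pm j x y"
proof (induction j arbitrary: y)
  case 0
  have "{\<omega> \<in> space M. (\<forall>k\<le>n. Z k \<omega> \<in> S k) \<and> Z (n + 0) \<omega> = y}
      = (if y = x then {\<omega> \<in> space M. \<forall>k\<le>n. Z k \<omega> \<in> S k} else {})"
    using Sn by auto
  then show ?case by simp
next
  case (Suc j)
  define E where "E = {\<omega> \<in> space M. \<forall>k\<le>n. Z k \<omega> \<in> S k}"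
  define F where "F z = {\<omega> \<in> space M. (\<forall>k\<le>n. Z k \<omega> \<in> S k) \<and> Z (n + j) \<omega> = z \<and> Z (Suc (n + j)) \<omega> = y}" for z
  have sets_F: "F z \<in> sets M" for z
  proof -
    have "{\<omega> \<in> space M. (\<forall>k\<in>{..n}. Z k \<omega> \<in> S k) \<and> Z (n + j) \<omega> = z \<and> Z (Suc (n + j)) \<omega> = y} \<in> sets M"
      by measurable
    then show ?thesis by (simp add: F_def atMost_iff)
  qed
  have prob_F: "prob (F z) = prob E * mat_pow Pm j x z * Pm z y" for z
  proof -
    define S' where "S' k = (if k \<le> n then S k else UNIV) \<inter> (if k = n + j then {z} else UNIV)" for k
    have "F z = {\<omega> \<in> space M. (\<forall>k\<le>n + j. Z k \<omega> \<in> S' k) \<and> Z (Suc (n + j)) \<omega> = y}"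
      by (auto simp: F_def S'_def)
    also have "prob \<dots> = prob {\<omega> \<in> space M. \<forall>k\<le>n + j. Z k \<omega> \<in> S' k} * Pm z y"
      by (rule prob_Z_step) (auto simp: S'_def)
    also have "{\<omega> \<in> space M. \<forall>k\<le>n + j. Z k \<omega> \<in> S' k} = {\<omega> \<in> space M. (\<forall>k\<le>n. Z k \<omega> \<in> S k) \<and> Z (n + j) \<omega> = z}"
      by (auto simp: S'_def)
    finally show ?thesis using Suc.IH unfolding E_def by simp
  qed
  have "{\<omega> \<in> space M. (\<forall>k\<le>n. Z k \<omega> \<in> S k) \<and> Z (n + Suc j) \<omega> = y} = (\<Union>z\<in>UNIV. F z)"
    by (auto simp: F_def)
  then have "prob {\<omega> \<in> space M. (\<forall>k\<le>n. Z k \<omega> \<in> S k) \<and> Z (n + Suc j) \<omega> = y} = (\<Sum>z\<in>UNIV. prob (F z))"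
    by (simp only:) (intro finite_measure_finite_Union, auto simp: disjoint_family_on_def F_def intro: sets_F)
  also have "\<dots> = prob E * mat_pow Pm (Suc j) x y"
    by (simp add: prob_F sum_distrib_left mult_ac)
  finally show ?case unfolding E_def .
qed

lemma prob_Z_constraints_after:
  assumes "\<forall>r\<in>R. ns r \<le> ns s" "s \<in> R"
  shows "prob ({\<omega> \<in> space M. \<forall>r\<in>R. Z (ns r) \<omega> = f r} \<inter> {\<omega> \<in> space M. Z (ns s + j) \<omega> = y})
       = prob {\<omega> \<in> space M. \<forall>r\<in>R. Z (ns r) \<omega> = f r} * mat_pow Pm j (f s) y"
proof -
  define S where "S k = {x. \<forall>r\<in>R. ns r = k \<longrightarrow> f r = x}" for k
  have constraints: "{\<omega> \<in> space M. \<forall>r\<in>R. Z (ns r) \<omega> = f r} = {\<omega> \<in> space M. \<forall>k\<le>ns s. Z k \<omega> \<in> S k}"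
    using assms(1) by (auto simp: S_def)
  have "S (ns s) \<subseteq> {f s}" using assms(2) by (auto simp: S_def)
  moreover have "{\<omega> \<in> space M. \<forall>k\<le>ns s. Z k \<omega> \<in> S k} \<inter> {\<omega> \<in> space M. Z (ns s + j) \<omega> = y}
      = {\<omega> \<in> space M. (\<forall>k\<le>ns s. Z k \<omega> \<in> S k) \<and> Z (ns s + j) \<omega> = y}"
    by auto
  ultimately show ?thesis
    unfolding constraints using prob_Z_steps[where S=S and n="ns s" and x="f s"] by simp
qed

lemma N_grid_event_eq_increments:
  fixes \<tau> :: "nat \<Rightarrow> real"
  assumes \<tau>: "\<tau> 0 = 0" "\<forall>i<m. \<tau> i \<le> \<tau> (Suc i)" and c: "c 0 = 0" "\<forall>i<m. c i \<le> c (Suc i)"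
  shows "{\<omega> \<in> space M. \<forall>i\<le>m. N (\<tau> i) \<omega> = c i}
       = {\<omega> \<in> space M. \<forall>i<m. N (\<tau> (Suc i)) \<omega> - N (\<tau> i) \<omega> = c (Suc i) - c i}"
proof (intro equalityI subsetI)
  fix \<omega> assume \<omega>: "\<omega> \<in> {\<omega> \<in> space M. \<forall>i<m. N (\<tau> (Suc i)) \<omega> - N (\<tau> i) \<omega> = c (Suc i) - c i}"
  have "N (\<tau> i) \<omega> = c i" if "i \<le> m" for i
    using that
  proof (induction i)
    case 0
    then show ?case using \<omega> \<tau> c N_zero by simp
  next
    case (Suc i)
    then have "i < m" by simp
    have "N (\<tau> i) \<omega> \<le> N (\<tau> (Suc i)) \<omega>"
      using \<omega> \<open>i < m\<close> \<tau> increasing_grid_nonneg[OF \<tau>, of i] by (intro N_mono) auto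
    moreover have "N (\<tau> (Suc i)) \<omega> - N (\<tau> i) \<omega> = c (Suc i) - c i" "c i \<le> c (Suc i)"
      using \<omega> c \<open>i < m\<close> by auto
    moreover have "N (\<tau> i) \<omega> = c i" using Suc by simp
    ultimately show ?case by linarith
  qed
  then show "\<omega> \<in> {\<omega> \<in> space M. \<forall>i\<le>m. N (\<tau> i) \<omega> = c i}" using \<omega> by auto
qed auto

lemma prob_N_grid:
  fixes \<tau> :: "nat \<Rightarrow> real"
  assumes \<tau>: "\<tau> 0 = 0" "\<forall>i<m. \<tau> i \<le> \<tau> (Suc i)" and c: "c 0 = 0" "\<forall>i<m. c i \<le> c (Suc i)"
  shows "prob {\<omega> \<in> space M. \<forall>i\<le>m. N (\<tau> i) \<omega> = c i}
       = (\<Prod>i<m. poisson_weight (\<tau> (Suc i) - \<tau> i) (c (Suc i) - c i))"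
proof (cases "m = 0")
  case True
  then have "{\<omega> \<in> space M. \<forall>i\<le>m. N (\<tau> i) \<omega> = c i} = space M" using N_zero \<tau> c by auto
  then show ?thesis using True by (simp add: prob_space)
next
  case False
  define A where "A i = (\<lambda>\<omega>. N (\<tau> (Suc i)) \<omega> - N (\<tau> i) \<omega>) -` {c (Suc i) - c i} \<inter> space M" for i
  have "indep_vars (\<lambda>_. count_space UNIV) (\<lambda>i \<omega>. N (\<tau> (Suc i)) \<omega> - N (\<tau> i) \<omega>) {..<m}"
    by (rule indep_N_increments) (use \<tau> in auto)
  then have indep: "indep_sets (\<lambda>i. {(\<lambda>\<omega>. N (\<tau> (Suc i)) \<omega> - N (\<tau> i) \<omega>) -` B \<inter> space M | B. True}) {..<m}"
    unfolding indep_vars_def by (auto elim!: indep_sets_mono_sets intro: sigma_sets.Basic)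
  have "{\<omega> \<in> space M. \<forall>i\<le>m. N (\<tau> i) \<omega> = c i} = (\<Inter>i\<in>{..<m}. A i)"
    unfolding N_grid_event_eq_increments[OF \<tau> c] using False by (auto simp: A_def)
  then have "prob {\<omega> \<in> space M. \<forall>i\<le>m. N (\<tau> i) \<omega> = c i} = (\<Prod>i\<in>{..<m}. prob (A i))"
    using indep_setsD[OF indep, of "{..<m}" A] False by (auto simp: A_def)
  also have "\<dots> = (\<Prod>i<m. poisson_weight (\<tau> (Suc i) - \<tau> i) (c (Suc i) - c i))"
  proof (rule prod.cong[OF refl])
    fix i assume "i \<in> {..<m}"
    moreover have "A i = {\<omega> \<in> space M. N (\<tau> (Suc i)) \<omega> - N (\<tau> i) \<omega> = c (Suc i) - c i}"
      by (auto simp: A_def)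
    ultimately show "prob (A i) = poisson_weight (\<tau> (Suc i) - \<tau> i) (c (Suc i) - c i)"
      using \<tau> increasing_grid_nonneg[OF \<tau>, of i] by (simp add: prob_N_increment)
  qed
  finally show ?thesis .
qed

lemma prob_N_increment_after:
  assumes R: "finite R" "R \<subseteq> {0..}" "s \<in> R" "\<forall>r\<in>R. r \<le> s" and "s \<le> t" and \<omega>0: "\<omega>0 \<in> space M"
  shows "prob ({\<omega> \<in> space M. \<forall>r\<in>R. N r \<omega> = N r \<omega>0} \<inter> {\<omega> \<in> space M. N t \<omega> = N s \<omega>0 + j})
       = prob {\<omega> \<in> space M. \<forall>r\<in>R. N r \<omega> = N r \<omega>0} * poisson_weight (t - s) j"
proof -
  obtain m \<tau> where \<tau>: "\<tau> 0 = 0" "\<forall>i<m. \<tau> i \<le> \<tau> (Suc i)" "\<tau> ` {1..m} = R" "\<tau> m = s"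
    using finite_set_increasing_grid[OF R] by blast
  define \<tau>' where "\<tau>' = \<tau>(Suc m := t)"
  define c where "c i = (if i \<le> m then N (\<tau> i) \<omega>0 else N s \<omega>0 + j)" for i
  have \<tau>': "\<tau>' 0 = 0" "\<forall>i<Suc m. \<tau>' i \<le> \<tau>' (Suc i)" "\<forall>i<m. \<tau>' i \<le> \<tau>' (Suc i)"
    using \<tau> \<open>s \<le> t\<close> by (auto simp: \<tau>'_def less_Suc_eq)
  have c: "c 0 = 0" "\<forall>i<Suc m. c i \<le> c (Suc i)" "\<forall>i<m. c i \<le> c (Suc i)"
    using \<tau> \<omega>0 increasing_grid_nonneg[OF \<tau>(1,2)]
    by (auto simp: c_def less_Suc_eq N_zero intro!: N_mono)
  have event: "{\<omega> \<in> space M. \<forall>r\<in>R. N r \<omega> = N r \<omega>0} = {\<omega> \<in> space M. \<forall>i\<le>m. N (\<tau>' i) \<omega> = c i}"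
  proof -
    have "(\<forall>r\<in>R. N r \<omega> = N r \<omega>0) \<longleftrightarrow> (\<forall>i\<in>{1..m}. N (\<tau> i) \<omega> = N (\<tau> i) \<omega>0)" for \<omega>
      unfolding \<tau>(3)[symmetric] by simp
    moreover have "(\<forall>i\<in>{1..m}. N (\<tau> i) \<omega> = N (\<tau> i) \<omega>0) \<longleftrightarrow> (\<forall>i\<le>m. N (\<tau>' i) \<omega> = c i)"
      if "\<omega> \<in> space M" for \<omega>
    proof -
      have "N (\<tau> 0) \<omega> = N (\<tau> 0) \<omega>0" using that \<omega>0 \<tau>(1) by (simp add: N_zero)
      then show ?thesis by (auto simp: \<tau>'_def c_def) (metis Suc_leI atLeastAtMost_iff gr0I)
    qed
    ultimately show ?thesis by auto
  qed
  have "{\<omega> \<in> space M. \<forall>i\<le>Suc m. N (\<tau>' i) \<omega> = c i}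
      = {\<omega> \<in> space M. \<forall>i\<le>m. N (\<tau>' i) \<omega> = c i} \<inter> {\<omega> \<in> space M. N (\<tau>' (Suc m)) \<omega> = c (Suc m)}"
    by (auto simp: le_Suc_eq)
  moreover have "\<tau>' (Suc m) = t" "c (Suc m) = N s \<omega>0 + j"
    by (simp_all add: \<tau>'_def c_def)
  moreover have "poisson_weight (\<tau>' (Suc m) - \<tau>' m) (c (Suc m) - c m) = poisson_weight (t - s) j"
    using \<tau>(4) by (simp add: \<tau>'_def c_def)
  then have "prob {\<omega> \<in> space M. \<forall>i\<le>Suc m. N (\<tau>' i) \<omega> = c i}
      = prob {\<omega> \<in> space M. \<forall>i\<le>m. N (\<tau>' i) \<omega> = c i} * poisson_weight (t - s) j"
    unfolding prob_N_grid[OF \<tau>'(1,2) c(1,2)] prob_N_grid[OF \<tau>'(1,3) c(1,3)] prod.lessThan_Suc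
    by (rule arg_cong)
  ultimately show ?thesis unfolding event by simp
qed

definition cylinder :: "real set \<Rightarrow> (real \<Rightarrow> 's) \<Rightarrow> 'w set" where
  "cylinder R f = {\<omega> \<in> space M. \<forall>r\<in>R. ctmc Z N r \<omega> = f r}"

lemma sets_cylinder: "finite R \<Longrightarrow> R \<subseteq> {0..} \<Longrightarrow> cylinder R f \<in> sets M"
  unfolding cylinder_def by (intro sets.sets_Collect_finite_All sets_X_event) auto

lemma cylinder_singleton: "cylinder {r} f = {\<omega> \<in> space M. ctmc Z N r \<omega> = f r}"
  by (auto simp: cylinder_def)

lemma cylinder_insert: "cylinder (insert r R) f = cylinder R f \<inter> {\<omega> \<in> space M. ctmc Z N r \<omega> = f r}"
  by (auto simp: cylinder_def)

lemma prob_clock_chain_after: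
  fixes f :: "real \<Rightarrow> 's"
  assumes R: "finite R" "R \<subseteq> {0..}" "s \<in> R" "\<forall>r\<in>R. r \<le> s" and st: "s \<le> t" and \<omega>0: "\<omega>0 \<in> space M"
  defines "EN \<equiv> {\<omega> \<in> space M. \<forall>r\<in>R. N r \<omega> = N r \<omega>0}"
    and "EZ \<equiv> {\<omega> \<in> space M. \<forall>r\<in>R. Z (N r \<omega>0) \<omega> = f r}"
  shows "prob ((EN \<inter> {\<omega> \<in> space M. N t \<omega> = N s \<omega>0 + j}) \<inter> (EZ \<inter> {\<omega> \<in> space M. Z (N s \<omega>0 + j) \<omega> = y}))
       = prob (EN \<inter> EZ) * (poisson_weight (t - s) j * mat_pow Pm j (f s) y)"
proof -
  have t0: "0 \<le> t" using R st by auto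
  have EN_sigma: "EN \<inter> {\<omega> \<in> space M. N t \<omega> = N s \<omega>0 + j} \<in> sigma_sets (space M) N_events"
    unfolding EN_def using R t0
    by (intro Int_in_sigma_sets N_events_finite_All sigma_sets.Basic) (auto simp: N_events_def)
  have EZ_sigma: "EZ \<inter> {\<omega> \<in> space M. Z (N s \<omega>0 + j) \<omega> = y} \<in> sigma_sets (space M) Z_events"
    unfolding EZ_def using R
    by (intro Int_in_sigma_sets Z_events_finite_All sigma_sets.Basic) (auto simp: Z_events_def)
  have "prob (EN \<inter> EZ) = prob EN * prob EZ"
    unfolding EN_def EZ_def using R by (intro prob_N_Z_event N_events_finite_All Z_events_finite_All) auto
  moreover have "prob (EN \<inter> {\<omega> \<in> space M. N t \<omega> = N s \<omega>0 + j}) = prob EN * poisson_weight (t - s) j"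
    unfolding EN_def by (rule prob_N_increment_after[OF R st \<omega>0])
  moreover have "prob (EZ \<inter> {\<omega> \<in> space M. Z (N s \<omega>0 + j) \<omega> = y}) = prob EZ * mat_pow Pm j (f s) y"
    unfolding EZ_def using \<omega>0 R by (intro prob_Z_constraints_after) (auto intro!: N_mono)
  ultimately show ?thesis
    unfolding prob_N_Z_event[OF EN_sigma EZ_sigma] by (simp add: ac_simps)
qed

text \<open>Conditioning additionally on the clock values \<open>N r = ns r\<close>, the clock after \<open>s\<close> and the jump
  chain after \<open>ns s\<close> are independent of the conditioning event.\<close>
lemma prob_jump_cylinder_future:
  fixes ns :: "real \<Rightarrow> nat" and f :: "real \<Rightarrow> 's"
  assumes R: "finite R" "R \<subseteq> {0..}" "s \<in> R" "\<forall>r\<in>R. r \<le> s" and st: "s \<le> t"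
  defines "D \<equiv> {\<omega> \<in> space M. \<forall>r\<in>R. N r \<omega> = ns r} \<inter> {\<omega> \<in> space M. \<forall>r\<in>R. Z (ns r) \<omega> = f r}"
  shows "prob (D \<inter> {\<omega> \<in> space M. ctmc Z N t \<omega> = y}) = prob D * transition_fun Pm (t - s) (f s) y"
proof (cases "{\<omega> \<in> space M. \<forall>r\<in>R. N r \<omega> = ns r} = {}")
  case True
  then have "D = {}" by (auto simp: D_def)
  then show ?thesis by simp
next
  case False
  then obtain \<omega>0 where \<omega>0: "\<omega>0 \<in> space M" and ns: "\<forall>r\<in>R. ns r = N r \<omega>0" by auto
  define EN where "EN = {\<omega> \<in> space M. \<forall>r\<in>R. N r \<omega> = N r \<omega>0}"
  define EZ where "EZ = {\<omega> \<in> space M. \<forall>r\<in>R. Z (N r \<omega>0) \<omega> = f r}"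
  define G where "G j = (EN \<inter> {\<omega> \<in> space M. N t \<omega> = N s \<omega>0 + j}) \<inter> (EZ \<inter> {\<omega> \<in> space M. Z (N s \<omega>0 + j) \<omega> = y})"
    for j
  have D: "D = EN \<inter> EZ" using ns by (auto simp: D_def EN_def EZ_def)
  have union: "D \<inter> {\<omega> \<in> space M. ctmc Z N t \<omega> = y} = (\<Union>j. G j)"
  proof (intro equalityI subsetI)
    fix \<omega> assume \<omega>: "\<omega> \<in> D \<inter> {\<omega> \<in> space M. ctmc Z N t \<omega> = y}"
    then have "N s \<omega> = N s \<omega>0" using R by (auto simp: D EN_def)
    moreover have "N s \<omega> \<le> N t \<omega>" using \<omega> R st by (intro N_mono) (auto simp: D_def)
    ultimately have "\<omega> \<in> G (N t \<omega> - N s \<omega>0)" using \<omega> by (auto simp: G_def D ctmc_def)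
    then show "\<omega> \<in> (\<Union>j. G j)" by blast
  qed (auto simp: G_def D ctmc_def)
  have "(\<lambda>j. prob (G j)) sums (prob D * transition_fun Pm (t - s) (f s) y)"
    unfolding G_def EN_def EZ_def D prob_clock_chain_after[OF R st \<omega>0]
    by (rule sums_mult[OF poisson_weight_sums_transition_fun[OF stoch]])
  moreover have "(\<lambda>j. prob (G j)) sums prob (\<Union>j. G j)"
    using R st by (intro finite_measure_UNION) (auto simp: G_def disjoint_family_on_def EN_def EZ_def
        intro!: sets.Int sets_N_event sets_Z_event sets.sets_Collect_finite_All)
  ultimately show ?thesis unfolding union by (rule sums_unique2[symmetric])
qed

lemma prob_cylinder_future:
  assumes R: "finite R" "R \<subseteq> {0..}" "s \<in> R" "\<forall>r\<in>R. r \<le> s" and st: "s \<le> t"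
  shows "prob (cylinder R f \<inter> {\<omega> \<in> space M. ctmc Z N t \<omega> = y})
       = prob (cylinder R f) * transition_fun Pm (t - s) (f s) y"
proof -
  define I where "I = PiE R (\<lambda>_. UNIV :: nat set)"
  define D where "D ns = {\<omega> \<in> space M. \<forall>r\<in>R. N r \<omega> = ns r} \<inter> {\<omega> \<in> space M. \<forall>r\<in>R. Z (ns r) \<omega> = f r}" for ns
  define Xt where "Xt = {\<omega> \<in> space M. ctmc Z N t \<omega> = y}"
  define c where "c = transition_fun Pm (t - s) (f s) y"
  have c0: "0 \<le> c" unfolding c_def using st by (intro transition_fun_nonneg[OF stoch]) simp
  have I: "countable I" unfolding I_def using R by (intro countable_PiE) auto
  have sets_D: "D ns \<in> sets M" for ns unfolding D_def
    by (intro sets.Int sets.sets_Collect_finite_All sets_N_event sets_Z_event) (use R in auto)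
  have sets_Xt: "Xt \<in> sets M" unfolding Xt_def using R st by (intro sets_X_event) auto
  have disj: "disjoint_family_on D I"
    unfolding disjoint_family_on_def
  proof (intro ballI impI)
    fix a b assume "a \<in> I" "b \<in> I" "a \<noteq> b"
    then obtain r where "r \<in> R" "a r \<noteq> b r" unfolding I_def by (metis PiE_ext UNIV_I)
    then show "D a \<inter> D b = {}" by (auto simp: D_def)
  qed
  have union: "cylinder R f = (\<Union>ns\<in>I. D ns)"
  proof (intro equalityI subsetI)
    fix \<omega> assume "\<omega> \<in> cylinder R f"
    then have "restrict (\<lambda>r. N r \<omega>) R \<in> I" "\<omega> \<in> D (restrict (\<lambda>r. N r \<omega>) R)"
      by (auto simp: I_def D_def cylinder_def ctmc_def)
    then show "\<omega> \<in> (\<Union>ns\<in>I. D ns)" by blast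
  qed (auto simp: D_def cylinder_def ctmc_def)
  have piece: "emeasure M (D ns \<inter> Xt) = ennreal c * emeasure M (D ns)" for ns
    using prob_jump_cylinder_future[OF R st, of ns f y] sets_D sets_Xt c0
    by (simp add: D_def Xt_def c_def emeasure_eq_measure ennreal_mult' mult.commute)
  have "cylinder R f \<inter> Xt = (\<Union>ns\<in>I. D ns \<inter> Xt)" unfolding union by blast
  moreover have "disjoint_family_on (\<lambda>ns. D ns \<inter> Xt) I"
    using disj unfolding disjoint_family_on_def by blast
  ultimately have "emeasure M (cylinder R f \<inter> Xt) = (\<integral>\<^sup>+ns. emeasure M (D ns \<inter> Xt) \<partial>count_space I)"
    using sets_D sets_Xt by (simp only:) (intro emeasure_UN_countable I, auto)
  also have "\<dots> = ennreal c * (\<integral>\<^sup>+ns. emeasure M (D ns) \<partial>count_space I)"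
    by (simp add: piece nn_integral_cmult)
  also have "(\<integral>\<^sup>+ns. emeasure M (D ns) \<partial>count_space I) = emeasure M (cylinder R f)"
    unfolding union by (rule emeasure_UN_countable[symmetric, OF sets_D I disj])
  finally have "ennreal (prob (cylinder R f \<inter> Xt)) = ennreal (c * prob (cylinder R f))"
    by (simp add: emeasure_eq_measure ennreal_mult' c0)
  then show ?thesis
    using c0 unfolding Xt_def c_def by (subst (asm) ennreal_inj) (auto simp: mult.commute)
qed

lemma prob_X_zero: "prob {\<omega> \<in> space M. ctmc Z N 0 \<omega> = x} = p0 x"
proof -
  have "{\<omega> \<in> space M. ctmc Z N 0 \<omega> = x} = {\<omega> \<in> space M. \<forall>i\<le>0. Z i \<omega> = (\<lambda>_. x) i}"
    by (auto simp: ctmc_def N_zero)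
  then show ?thesis using prob_Z_path[of 0 "\<lambda>_. x"] by simp
qed

lemma prob_X:
  assumes "0 \<le> t"
  shows "prob {\<omega> \<in> space M. ctmc Z N t \<omega> = y} = (\<Sum>x\<in>UNIV. p0 x * transition_fun Pm t x y)"
proof -
  have "{\<omega> \<in> space M. ctmc Z N t \<omega> = y} = (\<Union>x. cylinder {0} (\<lambda>_. x) \<inter> {\<omega> \<in> space M. ctmc Z N t \<omega> = y})"
    by (auto simp: cylinder_def)
  also have "prob \<dots> = (\<Sum>x\<in>UNIV. prob (cylinder {0} (\<lambda>_. x) \<inter> {\<omega> \<in> space M. ctmc Z N t \<omega> = y}))"
    by (intro finite_measure_finite_Union)
       (auto simp: disjoint_family_on_def cylinder_def intro!: sets.Int sets_cylinder sets_X_event assms)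
  also have "\<dots> = (\<Sum>x\<in>UNIV. p0 x * transition_fun Pm t x y)"
  proof (rule sum.cong[OF refl])
    fix x
    show "prob (cylinder {0} (\<lambda>_. x) \<inter> {\<omega> \<in> space M. ctmc Z N t \<omega> = y}) = p0 x * transition_fun Pm t x y"
      using prob_cylinder_future[of "{0}" 0 t "\<lambda>_. x" y] assms by (simp add: cylinder_singleton prob_X_zero)
  qed
  finally show ?thesis .
qed

lemma prob_X_stationary:
  assumes "0 \<le> t" "invariant_distribution Pm p0"
  shows "prob {\<omega> \<in> space M. ctmc Z N t \<omega> = y} = p0 y"
  using prob_X[OF assms(1)] invariant_distribution_transition_fun[OF stoch assms(2)] by simp

text \<open>Time reversal of the stationary chain; the induction removes the last time of the cylinder.\<close>
lemma prob_cylinder_insert_before: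
  assumes inv: "invariant_distribution Pm p0" and pos: "\<forall>x. 0 < p0 x"
    and R: "finite R" "R \<noteq> {}" "\<forall>r\<in>R. v < r" and v: "0 \<le> v"
  shows "prob (cylinder (insert v R) f)
       = p0 (f v) * transition_fun Pm (Min R - v) (f v) (f (Min R)) / p0 (f (Min R)) * prob (cylinder R f)"
  using R
proof (induction R rule: finite_ranking_induct[where f="\<lambda>r. r"])
  case empty
  then show ?case by simp
next
  case (insert m R)
  have m: "0 \<le> m" "v \<le> m" using insert.prems v by force+
  consider "m \<in> R" | "R = {}" | "m \<notin> R" "R \<noteq> {}" by blast
  then show ?case
  proof cases
    case 1
    then show ?thesis using insert by (simp add: insert_absorb)
  next
    case 2
    have "cylinder {v, m} f = cylinder {v} f \<inter> {\<omega> \<in> space M. ctmc Z N m \<omega> = f m}"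
      by (auto simp: cylinder_def)
    then have "prob (cylinder {v, m} f) = prob (cylinder {v} f) * transition_fun Pm (m - v) (f v) (f m)"
      using prob_cylinder_future[of "{v}" v m f "f m"] v m by simp
    moreover have "prob (cylinder {r} f) = p0 (f r)" if "0 \<le> r" for r
      using prob_X_stationary[OF that inv] by (simp add: cylinder_singleton)
    ultimately show ?thesis
      using 2 m v pos[rule_format, of "f m"] by simp
  next
    case 3
    define s where "s = Max R"
    have s: "s \<in> R" "\<forall>r\<in>R. r \<le> s" "s \<le> m" using 3 insert.hyps by (auto simp: s_def)
    have R0: "R \<subseteq> {0..}" using insert.prems v by force
    have "Min R \<le> m" using order_trans[OF Min_le[OF \<open>finite R\<close> s(1)] s(3)] .
    then have Min: "Min (insert m R) = Min R" using 3 \<open>finite R\<close> by (simp add: min_absorb2)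
    have "cylinder (insert v (insert m R)) f = cylinder (insert v R) f \<inter> {\<omega> \<in> space M. ctmc Z N m \<omega> = f m}"
      by (auto simp: cylinder_def)
    moreover have "\<forall>r\<in>insert v R. r \<le> s" using s insert.prems by (auto intro: less_imp_le)
    ultimately have "prob (cylinder (insert v (insert m R)) f)
        = prob (cylinder (insert v R) f) * transition_fun Pm (m - s) (f s) (f m)"
      using prob_cylinder_future[of "insert v R" s m f "f m"] insert.hyps R0 s v by simp
    moreover have "prob (cylinder (insert m R) f) = prob (cylinder R f) * transition_fun Pm (m - s) (f s) (f m)"
      using prob_cylinder_future[of R s m f "f m"] insert.hyps R0 s by (simp add: cylinder_insert)
    ultimately show ?thesis
      using insert.IH 3 insert.prems by (simp add: Min)
  qed
qed

lemma prob_X_inter_cylinder_stationary: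
  assumes inv: "invariant_distribution Pm p0" and pos: "\<forall>x. 0 < p0 x"
    and R: "finite R" "R \<noteq> {}" "R \<subseteq> {v..}" and v: "0 \<le> v"
  shows "prob ({\<omega> \<in> space M. ctmc Z N v \<omega> = x} \<inter> cylinder R f)
       = p0 x * transition_fun Pm (Min R - v) x (f (Min R)) / p0 (f (Min R)) * prob (cylinder R f)"
proof (cases "v \<in> R")
  case True
  then have "Min R = v" using R by (intro Min_eqI) auto
  moreover have "{\<omega> \<in> space M. ctmc Z N v \<omega> = x} \<inter> cylinder R f = (if f v = x then cylinder R f else {})"
    using True by (auto simp: cylinder_def)
  ultimately show ?thesis using pos[rule_format, of x] by (simp add: transition_fun_zero)
next
  case False
  have "Min R \<in> R" using R by simp
  then have "(f(v := x)) (Min R) = f (Min R)" "cylinder R (f(v := x)) = cylinder R f"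
    using False by (auto simp: cylinder_def)
  moreover have "{\<omega> \<in> space M. ctmc Z N v \<omega> = x} \<inter> cylinder R f = cylinder (insert v R) (f(v := x))"
    using False by (auto simp: cylinder_def)
  moreover have "\<forall>r\<in>R. v < r"
    using R(3) False by (metis atLeast_iff order_le_less subsetD)
  ultimately show ?thesis
    using prob_cylinder_insert_before[OF inv pos R(1,2) _ v, of "f(v := x)"] by simp
qed

end

section \<open>The likelihood ratio and its carre du champ\<close>

lemma invariant_distribution_pos:
  assumes stoch: "stochastic_matrix Pm" and irred: "irreducible_matrix Pm"
    and inv: "invariant_distribution Pm q"
  shows "0 < q y"
proof -
  have q_nonneg: "\<And>x. 0 \<le> q x" and "(\<Sum>x\<in>UNIV. q x) = 1"
    using inv by (auto simp: invariant_distribution_def prob_vector_def)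
  obtain x where x: "0 < q x"
  proof (rule ccontr)
    assume "\<not> thesis"
    then have "\<forall>x. q x \<le> 0" using that by (meson not_le)
    then have "(\<Sum>x\<in>UNIV. q x) \<le> 0" by (simp add: sum_nonpos)
    then show False using \<open>(\<Sum>x\<in>UNIV. q x) = 1\<close> by simp
  qed
  have "(x, y) \<in> {(a, b). 0 < Pm a b}\<^sup>*" using irred by (simp add: irreducible_matrix_def)
  then show ?thesis
  proof (induction rule: rtrancl_induct)
    case (step b c)
    have "q b * Pm b c \<le> (\<Sum>z\<in>UNIV. q z * Pm z c)"
      by (rule member_le_sum) (use q_nonneg stoch in \<open>auto simp: stochastic_matrix_def\<close>)
    also have "\<dots> = q c" using inv by (simp add: invariant_distribution_def)
    finally show ?case using step by (smt (verit) mult_pos_pos case_prodD mem_Collect_eq)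
  qed (use x in simp)
qed

definition likelihood_ratio :: "('s::finite \<Rightarrow> 's \<Rightarrow> real) \<Rightarrow> ('s \<Rightarrow> real) \<Rightarrow> ('s \<Rightarrow> real) \<Rightarrow> real \<Rightarrow> 's \<Rightarrow> real" where
  "likelihood_ratio Pm p0 q t y = (\<Sum>x\<in>UNIV. p0 x * transition_fun Pm t x y) / q y"

definition carre_du_champ :: "('s::finite \<Rightarrow> 's \<Rightarrow> real) \<Rightarrow> ('s \<Rightarrow> real) \<Rightarrow> ('s \<Rightarrow> real) \<Rightarrow> real \<Rightarrow> 's \<Rightarrow> real" where
  "carre_du_champ Pm p0 q t x =
     (\<Sum>y\<in>UNIV - {x}. kappa_hat Pm q x y * (likelihood_ratio Pm p0 q t y - likelihood_ratio Pm p0 q t x)\<^sup>2)"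

lemma kappa_hat_row_sum:
  assumes "invariant_distribution Pm q"
  shows "(\<Sum>y\<in>UNIV. kappa_hat Pm q x y) = 0"
proof -
  have "(\<Sum>y\<in>UNIV. q y * kappa Pm y x) = (\<Sum>y\<in>UNIV. q y * Pm y x) - (\<Sum>y\<in>UNIV. q y * (if y = x then 1 else 0))"
    by (simp add: kappa_def right_diff_distrib sum_subtractf)
  also have "\<dots> = 0" using assms by (simp add: invariant_distribution_def sum_times_delta)
  finally show ?thesis by (simp add: kappa_hat_def sum_divide_distrib[symmetric])
qed

text \<open>Since the rows of \<open>k\<close> sum to zero, \<open>k (l\<^sup>2) - 2 l (k l)\<close> is the carre du champ of \<open>l\<close>.
  Against a weight \<open>w\<close> with \<open>w' = - w k\<close> the left-hand side is the derivative of \<open>\<Sum>\<^sub>x w x (l x)\<^sup>2\<close>.\<close>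
lemma carre_du_champ_identity:
  fixes w l :: "'s::finite \<Rightarrow> real" and k :: "'s \<Rightarrow> 's \<Rightarrow> real"
  assumes row_sum: "\<And>x. (\<Sum>y\<in>UNIV. k x y) = 0"
  shows "(\<Sum>x\<in>UNIV. (- (\<Sum>z\<in>UNIV. w z * k z x)) * (l x)\<^sup>2 + w x * (2 * l x * (\<Sum>z\<in>UNIV. k x z * l z)))
       = - (\<Sum>x\<in>UNIV. w x * (\<Sum>y\<in>UNIV - {x}. k x y * (l y - l x)\<^sup>2))"
proof -
  have local: "(\<Sum>y\<in>UNIV - {x}. k x y * (l y - l x)\<^sup>2)
      = (\<Sum>y\<in>UNIV. k x y * (l y)\<^sup>2) - 2 * l x * (\<Sum>y\<in>UNIV. k x y * l y)" for x
  proof -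
    have "(\<Sum>y\<in>UNIV - {x}. k x y * (l y - l x)\<^sup>2) = (\<Sum>y\<in>UNIV. k x y * (l y - l x)\<^sup>2)"
      by (subst sum.remove[of UNIV x]) auto
    also have "\<dots> = (\<Sum>y\<in>UNIV. k x y * (l y)\<^sup>2 - 2 * l x * (k x y * l y) + (l x)\<^sup>2 * k x y)"
      by (intro sum.cong refl) (simp add: power2_eq_square algebra_simps)
    also have "\<dots> = (\<Sum>y\<in>UNIV. k x y * (l y)\<^sup>2) - 2 * l x * (\<Sum>y\<in>UNIV. k x y * l y) + (l x)\<^sup>2 * (\<Sum>y\<in>UNIV. k x y)"
      by (simp add: sum.distrib sum_subtractf sum_distrib_left)
    finally show ?thesis using row_sum by simp
  qed
  have swap: "(\<Sum>x\<in>UNIV. (\<Sum>z\<in>UNIV. w z * k z x) * (l x)\<^sup>2) = (\<Sum>x\<in>UNIV. w x * (\<Sum>y\<in>UNIV. k x y * (l y)\<^sup>2))"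
  proof -
    have "(\<Sum>x\<in>UNIV. (\<Sum>z\<in>UNIV. w z * k z x) * (l x)\<^sup>2) = (\<Sum>x\<in>UNIV. \<Sum>z\<in>UNIV. w z * (k z x * (l x)\<^sup>2))"
      by (simp add: sum_distrib_right mult.assoc)
    also have "\<dots> = (\<Sum>z\<in>UNIV. \<Sum>x\<in>UNIV. w z * (k z x * (l x)\<^sup>2))" by (rule sum.swap)
    finally show ?thesis by (simp add: sum_distrib_left)
  qed
  have "(\<Sum>x\<in>UNIV. (- (\<Sum>z\<in>UNIV. w z * k z x)) * (l x)\<^sup>2 + w x * (2 * l x * (\<Sum>z\<in>UNIV. k x z * l z)))
      = - (\<Sum>x\<in>UNIV. (\<Sum>z\<in>UNIV. w z * k z x) * (l x)\<^sup>2) + (\<Sum>x\<in>UNIV. w x * (2 * l x * (\<Sum>z\<in>UNIV. k x z * l z)))"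
    by (simp add: sum.distrib sum_negf sum_subtractf)
  also have "\<dots> = - (\<Sum>x\<in>UNIV. w x * ((\<Sum>y\<in>UNIV. k x y * (l y)\<^sup>2) - 2 * l x * (\<Sum>y\<in>UNIV. k x y * l y)))"
    unfolding swap by (simp add: right_diff_distrib sum_subtractf)
  finally show ?thesis by (simp add: local)
qed

locale reversed_rates =
  fixes Pm :: "'s::finite \<Rightarrow> 's \<Rightarrow> real" and q p0 :: "'s \<Rightarrow> real"
  assumes stoch: "stochastic_matrix Pm" and inv: "invariant_distribution Pm q"
    and q_pos: "\<forall>x. 0 < q x"
begin

abbreviation "lr \<equiv> likelihood_ratio Pm p0 q"
abbreviation "\<Gamma> \<equiv> carre_du_champ Pm p0 q"

lemma q_nonzero: "q x \<noteq> 0"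
  using q_pos by (metis less_irrefl)

lemma likelihood_ratio_derivative:
  "((\<lambda>t. likelihood_ratio Pm p0 q t y) has_real_derivative
     (\<Sum>z\<in>UNIV. kappa_hat Pm q y z * likelihood_ratio Pm p0 q t z)) (at t)"
proof -
  let ?p = "\<lambda>t z. \<Sum>x\<in>UNIV. p0 x * transition_fun Pm t x z"
  have "((\<lambda>t. ?p t y) has_real_derivative (\<Sum>x\<in>UNIV. p0 x * (\<Sum>z\<in>UNIV. transition_fun Pm t x z * kappa Pm z y)))
      (at t)"
    by (intro DERIV_sum DERIV_cmult forward_equation[OF stoch])
  also have "(\<Sum>x\<in>UNIV. p0 x * (\<Sum>z\<in>UNIV. transition_fun Pm t x z * kappa Pm z y))
      = (\<Sum>x\<in>UNIV. \<Sum>z\<in>UNIV. p0 x * transition_fun Pm t x z * kappa Pm z y)"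
    by (simp add: sum_distrib_left mult.assoc)
  also have "\<dots> = (\<Sum>z\<in>UNIV. ?p t z * kappa Pm z y)"
    by (subst sum.swap) (simp add: sum_distrib_right)
  finally have "((\<lambda>t. ?p t y / q y) has_real_derivative (\<Sum>z\<in>UNIV. ?p t z * kappa Pm z y) / q y) (at t)"
    by (rule DERIV_cdivide)
  moreover have "(\<Sum>z\<in>UNIV. ?p t z * kappa Pm z y) / q y
      = (\<Sum>z\<in>UNIV. kappa_hat Pm q y z * likelihood_ratio Pm p0 q t z)"
    unfolding sum_divide_distrib
    by (intro sum.cong refl) (simp add: likelihood_ratio_def kappa_hat_def q_nonzero)
  ultimately show ?thesis unfolding likelihood_ratio_def by simp
qed

lemma isCont_carre_du_champ: "isCont (\<lambda>t. \<Gamma> t x) t"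
  unfolding carre_du_champ_def
  by (intro continuous_intros DERIV_isCont[OF likelihood_ratio_derivative])

lemma weighted_square_derivative:
  fixes w :: "real \<Rightarrow> 's \<Rightarrow> real"
  assumes w: "\<And>x. ((\<lambda>v. w v x) has_real_derivative (- (\<Sum>z\<in>UNIV. w v z * kappa_hat Pm q z x))) (at v)"
  shows "((\<lambda>v. \<Sum>x\<in>UNIV. w v x * (likelihood_ratio Pm p0 q v x)\<^sup>2) has_real_derivative
           (- (\<Sum>x\<in>UNIV. w v x * carre_du_champ Pm p0 q v x))) (at v)"
proof -
  let ?l = "likelihood_ratio Pm p0 q" and ?k = "kappa_hat Pm q"
  have "((\<lambda>v. w v x * (?l v x)\<^sup>2) has_real_derivative
      (- (\<Sum>z\<in>UNIV. w v z * ?k z x)) * (?l v x)\<^sup>2 + w v x * (2 * ?l v x * (\<Sum>z\<in>UNIV. ?k x z * ?l v z))) (at v)"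
    for x
    using DERIV_mult[OF w[of x] DERIV_power[OF likelihood_ratio_derivative[of x v], of 2]]
    by (simp add: mult_ac)
  then have "((\<lambda>v. \<Sum>x\<in>UNIV. w v x * (?l v x)\<^sup>2) has_real_derivative
      (\<Sum>x\<in>UNIV. (- (\<Sum>z\<in>UNIV. w v z * ?k z x)) * (?l v x)\<^sup>2 + w v x * (2 * ?l v x * (\<Sum>z\<in>UNIV. ?k x z * ?l v z)))) (at v)"
    by (intro DERIV_sum)
  then show ?thesis
    unfolding carre_du_champ_def carre_du_champ_identity[OF kappa_hat_row_sum[OF inv]] .
qed

text \<open>The weights arising from the time-reversed chain solve the adjoint equation \<open>w' = - w kappa_hat\<close>.\<close>
lemma reversed_weight_derivative:
  "((\<lambda>v. q x * transition_fun Pm (r - v) x y) has_real_derivative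
     (- (\<Sum>z\<in>UNIV. q z * transition_fun Pm (r - v) z y * kappa_hat Pm q z x))) (at v)"
proof -
  have "((\<lambda>v. transition_fun Pm (r - v) x y) has_real_derivative
      (\<Sum>z\<in>UNIV. kappa Pm x z * transition_fun Pm (r - v) z y) * -1) (at v)"
    by (rule DERIV_chain2[OF backward_equation[OF stoch]]) (auto intro!: derivative_eq_intros)
  then have "((\<lambda>v. q x * transition_fun Pm (r - v) x y) has_real_derivative
      q x * ((\<Sum>z\<in>UNIV. kappa Pm x z * transition_fun Pm (r - v) z y) * -1)) (at v)"
    by (rule DERIV_cmult)
  moreover have "q x * ((\<Sum>z\<in>UNIV. kappa Pm x z * transition_fun Pm (r - v) z y) * -1)
      = - (\<Sum>z\<in>UNIV. q z * transition_fun Pm (r - v) z y * kappa_hat Pm q z x)"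
    by (simp add: sum_distrib_left kappa_hat_def q_nonzero field_simps flip: sum_negf)
  ultimately show ?thesis by simp
qed

lemma stationary_weight_derivative:
  "((\<lambda>v. q x) has_real_derivative (- (\<Sum>z\<in>UNIV. q z * kappa_hat Pm q z x))) (at v)"
proof -
  have "(\<Sum>z\<in>UNIV. q z * kappa_hat Pm q z x) = (\<Sum>z\<in>UNIV. q x * kappa Pm x z)"
    by (intro sum.cong refl) (simp add: kappa_hat_def q_nonzero)
  also have "\<dots> = q x * ((\<Sum>z\<in>UNIV. Pm x z) - 1)"
    by (simp add: kappa_def sum_distrib_left[symmetric] sum_subtractf sum_delta_times right_diff_distrib)
  finally show ?thesis using stoch by (simp add: stochastic_matrix_def)
qed

end

section \<open>The time-reversed process\<close>

lemma integrable_indicator_mult: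
  "A \<in> sets M \<Longrightarrow> integrable M f \<Longrightarrow> integrable M (\<lambda>x. indicator A x * f x :: real)"
  using integrable_mult_indicator[of A M f] by simp

lemma set_integral_eq_on_sigma_sets:
  fixes f g :: "'a \<Rightarrow> real"
  assumes G: "Int_stable G" "G \<subseteq> Pow (space M)" "sigma_sets (space M) G \<subseteq> sets M"
    and f: "integrable M f" and g: "integrable M g"
    and space: "(\<integral>x\<in>space M. f x \<partial>M) = (\<integral>x\<in>space M. g x \<partial>M)"
    and gen: "\<And>A. A \<in> G \<Longrightarrow> (\<integral>x\<in>A. f x \<partial>M) = (\<integral>x\<in>A. g x \<partial>M)"
    and A: "A \<in> sigma_sets (space M) G"
  shows "(\<integral>x\<in>A. f x \<partial>M) = (\<integral>x\<in>A. g x \<partial>M)"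
  using G(1,2) A
proof (induct rule: sigma_sets_induct_disjoint)
  case (basic A)
  then show ?case by (rule gen)
next
  case empty
  then show ?case by (simp add: set_lebesgue_integral_def)
next
  case (compl A)
  have A: "A \<in> sets M" using compl(1) G(3) by auto
  have diff: "(\<integral>x\<in>space M - A. h x \<partial>M) = (\<integral>x\<in>space M. h x \<partial>M) - (\<integral>x\<in>A. h x \<partial>M)"
    if h: "integrable M h" for h :: "'a \<Rightarrow> real"
  proof -
    have "(\<integral>x\<in>space M - A. h x \<partial>M) = (\<integral>x. indicator (space M) x * h x - indicator A x * h x \<partial>M)"
      unfolding set_lebesgue_integral_def
      by (rule Bochner_Integration.integral_cong[OF refl])
         (use A sets.sets_into_space in \<open>auto simp: indicator_def\<close>)
    also have "\<dots> = (\<integral>x. indicator (space M) x * h x \<partial>M) - (\<integral>x. indicator A x * h x \<partial>M)"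
      using integrable_indicator_mult[OF A h] integrable_indicator_mult[OF sets.top h] by simp
    finally show ?thesis by (simp add: set_lebesgue_integral_def)
  qed
  show ?case using diff[OF f] diff[OF g] space compl(2) by simp
next
  case (union F)
  have F: "\<And>i. F i \<in> sets M" using union(2) G(3) by auto
  have disj: "\<And>i j. i \<noteq> j \<Longrightarrow> F i \<inter> F j = {}" using union(1) by (auto simp: disjoint_family_on_def)
  have sum: "(\<integral>x\<in>(\<Union>i. F i). h x \<partial>M) = (\<Sum>i. (\<integral>x\<in>F i. h x \<partial>M))"
    if h: "integrable M h" for h :: "'a \<Rightarrow> real"
  proof (rule lebesgue_integral_countable_add[OF F disj])
    have "(\<Union>i. F i) \<in> sets M" using F by auto
    then show "set_integrable M (\<Union>i. F i) h"
      unfolding set_integrable_def by (rule integrable_mult_indicator[OF _ h])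
  qed
  show ?case using sum[OF f] sum[OF g] union(3) by simp
qed

definition dyadic_floor :: "nat \<Rightarrow> real \<Rightarrow> real" where
  "dyadic_floor n u = real_of_int \<lfloor>u * 2 ^ n\<rfloor> / 2 ^ n"

lemma dyadic_floor_le: "dyadic_floor n u \<le> u"
  using of_int_floor_le[of "u * 2 ^ n"] by (simp add: dyadic_floor_def divide_le_eq)

lemma dyadic_floor_gt: "u - 1 / 2 ^ n < dyadic_floor n u"
proof -
  have "u * 2 ^ n < real_of_int \<lfloor>u * 2 ^ n\<rfloor> + 1" by (rule real_of_int_floor_add_one_gt)
  then have "u < (real_of_int \<lfloor>u * 2 ^ n\<rfloor> + 1) / 2 ^ n" by (simp add: pos_less_divide_eq)
  then show ?thesis by (simp add: dyadic_floor_def add_divide_distrib)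
qed

locale reversal = reversed_rates Pm q p0
  for Pm :: "'s::finite \<Rightarrow> 's \<Rightarrow> real" and q p0 :: "'s \<Rightarrow> real" +
  fixes P Q :: "'w measure" and Z :: "nat \<Rightarrow> 'w \<Rightarrow> 's" and N :: "real \<Rightarrow> 'w \<Rightarrow> nat" and T :: real
  assumes P_setting: "uniformized_chain_setting P Z N p0 Pm"
    and Q_setting: "uniformized_chain_setting Q Z N q Pm"
    and T_pos: "0 < T"
begin

sublocale PP: uniformized_chain P Z N p0 Pm using P_setting stoch by unfold_locales
sublocale QQ: uniformized_chain Q Z N q Pm using Q_setting stoch by unfold_locales

abbreviation "X \<equiv> ctmc Z N"
abbreviation "X_event t x \<equiv> {\<omega> \<in> space Q. X t \<omega> = x}"
abbreviation "F \<equiv> natural_filtration Q (\<lambda>s. ctmc Z N (T - s))"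

lemma lratio_eq: "0 \<le> t \<Longrightarrow> lratio P Z N q t y = lr t y"
  unfolding lratio_def likelihood_ratio_def using PP.prob_X by simp

definition ratio_bound :: real where
  "ratio_bound = (\<Sum>y\<in>UNIV. 1 / q y)"

definition carre_du_champ_bound :: real where
  "carre_du_champ_bound = (\<Sum>x\<in>UNIV. \<Sum>y\<in>UNIV. \<bar>kappa_hat Pm q x y\<bar>) * ratio_bound\<^sup>2"

lemma likelihood_ratio_bounds:
  assumes "0 \<le> t" shows "0 \<le> lr t y" "lr t y \<le> ratio_bound"
proof -
  have "1 / q y \<le> ratio_bound"
    unfolding ratio_bound_def by (rule member_le_sum) (use q_pos in \<open>auto intro: less_imp_le\<close>)
  moreover have "lr t y = PP.prob {\<omega> \<in> space P. X t \<omega> = y} / q y"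
    using lratio_eq[OF assms] by (simp add: lratio_def)
  moreover have "PP.prob {\<omega> \<in> space P. X t \<omega> = y} / q y \<le> 1 / q y"
    using q_pos by (intro divide_right_mono) (auto intro: less_imp_le)
  ultimately show "0 \<le> lr t y" "lr t y \<le> ratio_bound"
    using q_pos[rule_format, of y] by auto
qed

lemma abs_carre_du_champ_le:
  assumes "0 \<le> t" shows "\<bar>\<Gamma> t x\<bar> \<le> carre_du_champ_bound"
proof -
  have diff: "(lr t y - lr t x)\<^sup>2 \<le> ratio_bound\<^sup>2" for y
    using likelihood_ratio_bounds[OF assms, of x] likelihood_ratio_bounds[OF assms, of y]
    by (intro power2_le_iff_abs_le[THEN iffD2]) auto
  have "\<bar>\<Gamma> t x\<bar> \<le> (\<Sum>y\<in>UNIV - {x}. \<bar>kappa_hat Pm q x y * (lr t y - lr t x)\<^sup>2\<bar>)"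
    unfolding carre_du_champ_def by (rule sum_abs)
  also have "\<dots> \<le> (\<Sum>y\<in>UNIV. \<bar>kappa_hat Pm q x y\<bar> * ratio_bound\<^sup>2)"
    by (rule order_trans[OF sum_mono sum_mono2])
       (auto simp: abs_mult intro!: mult_left_mono diff)
  also have "\<dots> \<le> (\<Sum>x\<in>UNIV. \<Sum>y\<in>UNIV. \<bar>kappa_hat Pm q x y\<bar> * ratio_bound\<^sup>2)"
    by (rule member_le_sum[where f="\<lambda>x. \<Sum>y\<in>UNIV. \<bar>kappa_hat Pm q x y\<bar> * ratio_bound\<^sup>2"])
       (auto intro: sum_nonneg)
  finally show ?thesis by (simp add: carre_du_champ_bound_def sum_distrib_right)
qed

lemma carre_du_champ_bound_nonneg: "0 \<le> carre_du_champ_bound"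
  using abs_carre_du_champ_le[of 0 undefined] by simp

definition reversed_generators :: "real \<Rightarrow> 'w set set" where
  "reversed_generators s = {X_event (T - u) y | u y. 0 \<le> u \<and> u \<le> s}"

lemma reversed_generators_subset: "reversed_generators s \<subseteq> Pow (space Q)"
  by (auto simp: reversed_generators_def)

lemma sets_F: "sets (F s) = sigma_sets (space Q) (reversed_generators s)"
  unfolding natural_filtration_def reversed_generators_def[symmetric]
  using reversed_generators_subset by (simp add: sets_measure_of)

lemma space_F: "space (F s) = space Q"
  unfolding natural_filtration_def reversed_generators_def[symmetric]
  using reversed_generators_subset by (simp add: space_measure_of_conv)

lemma X_event_in_reversed_generators: "T - s \<le> r \<Longrightarrow> r \<le> T \<Longrightarrow> X_event r y \<in> reversed_generators s"
  unfolding reversed_generators_def by (rule CollectI, rule exI[of _ "T - r"], rule exI[of _ y]) simp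

lemma X_event_in_F: "T - s \<le> r \<Longrightarrow> r \<le> T \<Longrightarrow> X_event r y \<in> sets (F s)"
  unfolding sets_F by (rule sigma_sets.Basic X_event_in_reversed_generators)+

lemma subalgebra_F: "s \<le> T \<Longrightarrow> subalgebra Q (F s)"
  unfolding subalgebra_def sets_F space_F
  by (auto simp: reversed_generators_def intro!: sets.sigma_sets_subset QQ.sets_X_event)

lemma F_mono: "s \<le> t \<Longrightarrow> sets (F s) \<subseteq> sets (F t)"
  unfolding sets_F by (rule sigma_sets_subseteq) (auto simp: reversed_generators_def)

lemma measurable_X_F: "0 \<le> s \<Longrightarrow> X (T - s) \<in> measurable (F s) (count_space UNIV)"
  unfolding measurable_count_space_eq2[OF finite_class.finite_UNIV]
proof (intro conjI ballI)
  fix x :: 's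
  assume "0 \<le> s"
  have "X (T - s) -` {x} \<inter> space (F s) = X_event (T - s) x" by (auto simp: space_F)
  then show "X (T - s) -` {x} \<inter> space (F s) \<in> sets (F s)"
    using X_event_in_F[of s "T - s" x] \<open>0 \<le> s\<close> by simp
qed auto

lemma X_right_constant:
  assumes \<omega>: "\<omega> \<in> space Q" and t: "0 \<le> t"
  obtains b where "t < b" "\<And>r. t \<le> r \<Longrightarrow> r < b \<Longrightarrow> X r \<omega> = X t \<omega>"
proof -
  obtain b where "t < b" "\<forall>r>t. r < b \<longrightarrow> N r \<omega> = N t \<omega>"
    using QQ.N_right_constant[OF \<omega> t] unfolding eventually_at_right_field by blast
  then show thesis
    using that[of b] by (metis ctmc_def order_le_less)
qed

lemma eventually_X_dyadic_reversed:
  assumes \<omega>: "\<omega> \<in> space Q" and u: "u \<le> T"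
  shows "\<forall>\<^sub>F n in sequentially. X (T - dyadic_floor n u) \<omega> = X (T - u) \<omega>"
proof -
  obtain b where b: "T - u < b" "\<And>r. T - u \<le> r \<Longrightarrow> r < b \<Longrightarrow> X r \<omega> = X (T - u) \<omega>"
    using X_right_constant[OF \<omega>, of "T - u"] u by auto
  have "\<forall>\<^sub>F n in sequentially. (1/2::real) ^ n < b - (T - u)"
    using b(1) by (intro order_tendstoD(2)[OF LIMSEQ_realpow_zero]) auto
  then show ?thesis
  proof (rule eventually_mono)
    fix n assume "(1/2::real) ^ n < b - (T - u)"
    then show "X (T - dyadic_floor n u) \<omega> = X (T - u) \<omega>"
      using dyadic_floor_le[of n u] dyadic_floor_gt[of u n] by (intro b(2)) (auto simp: power_one_over)
  qed
qed

text \<open>The reversed path is the pointwise limit of its values at the dyadic times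
  \<open>T - dyadic_floor n u \<ge> T - u\<close>, by right-continuity of \<open>X\<close>.\<close>
lemma measurable_indicator_X_reversed:
  fixes B :: "'w measure"
  assumes space: "space B = space Q" and s: "0 \<le> s" "s \<le> T"
    and X_sets: "\<And>r. T - s \<le> r \<Longrightarrow> r \<le> T \<Longrightarrow> X_event r x \<in> sets B"
  shows "(\<lambda>z. indicator {0..s} (snd z) * indicator (X_event (T - snd z) x) (fst z) :: real)
           \<in> borel_measurable (B \<Otimes>\<^sub>M lborel)"
proof (rule borel_measurable_LIMSEQ_real)
  define G where "G n k z = (if 0 \<le> k \<and> real_of_int k / 2 ^ n \<le> s
      then indicator {0..s} (snd z) * indicator (X_event (T - real_of_int k / 2 ^ n) x) (fst z) else (0::real))"
    for n :: nat and k :: int and z :: "'w \<times> real"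
  define A where "A n z = G n \<lfloor>snd z * 2 ^ n\<rfloor> z" for n z
  show "A n \<in> borel_measurable (B \<Otimes>\<^sub>M lborel)" for n
    unfolding A_def
  proof (rule measurable_compose_countable[where f="G n"])
    fix k :: int
    show "G n k \<in> borel_measurable (B \<Otimes>\<^sub>M lborel)"
    proof (cases "0 \<le> k \<and> real_of_int k / 2 ^ n \<le> s")
      case True
      then have "X_event (T - real_of_int k / 2 ^ n) x \<in> sets B"
        using s by (intro X_sets) auto
      then show ?thesis using True unfolding G_def by measurable
    next
      case False
      then have "G n k = (\<lambda>z. 0)" by (auto simp: G_def fun_eq_iff)
      then show ?thesis by simp
    qed
  qed measurable
  fix z :: "'w \<times> real" assume "z \<in> space (B \<Otimes>\<^sub>M lborel)"
  then obtain \<omega> u where z: "z = (\<omega>, u)" and \<omega>: "\<omega> \<in> space Q"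
    using space by (cases z) (auto simp: space_pair_measure)
  show "(\<lambda>n. A n z) \<longlonglongrightarrow> indicator {0..s} (snd z) * indicator (X_event (T - snd z) x) (fst z)"
  proof (cases "0 \<le> u \<and> u \<le> s")
    case False
    then have "A n z = 0" for n
      by (auto simp: A_def G_def z)
    then show ?thesis using False by (simp add: z)
  next
    case True
    have A: "A n z = indicator (X_event (T - dyadic_floor n u) x) \<omega>" for n
      using True dyadic_floor_le[of n u] by (simp add: A_def G_def z dyadic_floor_def)
    have "\<forall>\<^sub>F n in sequentially. A n z = indicator (X_event (T - u) x) \<omega>"
      using eventually_X_dyadic_reversed[OF \<omega>, of u] True s
      by (auto simp: A indicator_def elim!: eventually_mono)
    then show ?thesis using True by (simp add: z tendsto_eventually)
  qed
qed

definition Gamma_path :: "'w \<Rightarrow> real \<Rightarrow> real" where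
  "Gamma_path \<omega> u = \<Gamma> (T - u) (X (T - u) \<omega>)"

definition Mhat :: "real \<Rightarrow> 'w \<Rightarrow> real" where
  "Mhat s \<omega> = (lr (T - s) (X (T - s) \<omega>))\<^sup>2 - (LINT u:{0..s}|lborel. Gamma_path \<omega> u)"

lemma abs_Gamma_path_le: "u \<le> T \<Longrightarrow> \<bar>Gamma_path \<omega> u\<bar> \<le> carre_du_champ_bound"
  unfolding Gamma_path_def by (rule abs_carre_du_champ_le) simp

lemma borel_measurable_carre_du_champ_reversed: "(\<lambda>u. \<Gamma> (T - u) x) \<in> borel_measurable borel"
  by (intro borel_measurable_continuous_onI continuous_at_imp_continuous_on ballI
      isCont_o2[OF _ isCont_carre_du_champ] continuous_intros)

lemma measurable_Gamma_path:
  fixes B :: "'w measure"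
  assumes space: "space B = space Q" and s: "0 \<le> s" "s \<le> T"
    and X_sets: "\<And>r x. T - s \<le> r \<Longrightarrow> r \<le> T \<Longrightarrow> X_event r x \<in> sets B"
    and S: "S \<in> sets borel" "S \<subseteq> {0..s}"
  shows "(\<lambda>z. indicator S (snd z) * Gamma_path (fst z) (snd z)) \<in> borel_measurable (B \<Otimes>\<^sub>M lborel)"
proof -
  let ?sum = "\<lambda>z. \<Sum>x\<in>UNIV. \<Gamma> (T - snd z) x * (indicator {0..s} (snd z) * indicator (X_event (T - snd z) x) (fst z))"
  have eq: "indicator S (snd z) * Gamma_path (fst z) (snd z) = indicator S (snd z) * ?sum z"
    if z: "z \<in> space (B \<Otimes>\<^sub>M lborel)" for z
  proof (cases "snd z \<in> S")
    case True
    have "fst z \<in> space Q" using z space by (simp add: space_pair_measure mem_Times_iff)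
    moreover have "snd z \<in> {0..s}" using True S(2) by blast
    ultimately have "?sum z = (\<Sum>x\<in>UNIV. \<Gamma> (T - snd z) x * (if x = X (T - snd z) (fst z) then 1 else 0))"
      by (intro sum.cong refl) (auto simp: indicator_def)
    also have "\<dots> = Gamma_path (fst z) (snd z)" unfolding Gamma_path_def by (rule sum_times_delta)
    finally show ?thesis by simp
  qed simp
  have "(\<lambda>z. indicator S (snd z) :: real) \<in> borel_measurable (B \<Otimes>\<^sub>M lborel)"
    by (rule measurable_compose[OF measurable_snd]) (simp add: S(1) borel_measurable_indicator)
  moreover have "(\<lambda>z. \<Gamma> (T - snd z) x) \<in> borel_measurable (B \<Otimes>\<^sub>M lborel)" for x
    by (rule measurable_compose[OF measurable_snd]) (simp add: borel_measurable_carre_du_champ_reversed)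
  ultimately have "(\<lambda>z. indicator S (snd z) * ?sum z) \<in> borel_measurable (B \<Otimes>\<^sub>M lborel)"
    by (intro borel_measurable_times borel_measurable_sum measurable_indicator_X_reversed[OF space s X_sets])
  then show ?thesis by (rule measurable_cong[THEN iffD1, rotated]) (simp add: eq)
qed

lemma set_integrable_Gamma_path:
  assumes \<omega>: "\<omega> \<in> space Q" and S: "S \<in> sets borel" "S \<subseteq> {0..T}"
  shows "set_integrable lborel S (Gamma_path \<omega>)"
  unfolding set_integrable_def
proof (rule integrableI_bounded_set[where A="{0..T}" and B=carre_du_champ_bound])
  have "(\<lambda>z. indicator S (snd z) * Gamma_path (fst z) (snd z)) \<in> borel_measurable (Q \<Otimes>\<^sub>M lborel)"
    by (rule measurable_Gamma_path[OF refl _ order_refl _ S]) (use T_pos in \<open>auto intro: QQ.sets_X_event\<close>)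
  from measurable_Pair2[OF this \<omega>] show "(\<lambda>u. indicator S u *\<^sub>R Gamma_path \<omega> u) \<in> borel_measurable lborel"
    by simp
  show "AE u in lborel. u \<in> {0..T} \<longrightarrow> norm (indicator S u *\<^sub>R Gamma_path \<omega> u) \<le> carre_du_champ_bound"
    using abs_Gamma_path_le carre_du_champ_bound_nonneg by (auto simp: indicator_def)
  show "AE u in lborel. u \<notin> {0..T} \<longrightarrow> indicator S u *\<^sub>R Gamma_path \<omega> u = 0"
    by (rule AE_I2) (use S(2) in \<open>auto simp: indicator_def\<close>)
qed (auto simp: emeasure_lborel_Icc_eq)

lemma integral_Gamma_path_split:
  assumes \<omega>: "\<omega> \<in> space Q" and st: "0 \<le> s" "s \<le> t" "t \<le> T"
  shows "(LINT u:{0..t}|lborel. Gamma_path \<omega> u)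
       = (LINT u:{0..s}|lborel. Gamma_path \<omega> u) + (LINT u:{s<..t}|lborel. Gamma_path \<omega> u)"
proof -
  have "{0..t} = {0..s} \<union> {s<..t}" using st by auto
  moreover have "set_integrable lborel {0..s} (Gamma_path \<omega>)" "set_integrable lborel {s<..t} (Gamma_path \<omega>)"
    using st by (auto intro!: set_integrable_Gamma_path[OF \<omega>])
  ultimately show ?thesis by (simp only:) (rule set_integral_Un, auto)
qed

lemma abs_integral_Gamma_path_le:
  assumes \<omega>: "\<omega> \<in> space Q" and s: "0 \<le> s" "s \<le> T"
  shows "\<bar>LINT u:{0..s}|lborel. Gamma_path \<omega> u\<bar> \<le> carre_du_champ_bound * s"
proof -
  have int: "set_integrable lborel {0..s} (Gamma_path \<omega>)"
    using s by (intro set_integrable_Gamma_path[OF \<omega>]) auto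
  have "\<bar>LINT u:{0..s}|lborel. Gamma_path \<omega> u\<bar> \<le> (LINT u:{0..s}|lborel. norm (Gamma_path \<omega> u))"
    using set_integral_norm_bound[OF int] by simp
  also have "\<dots> \<le> (LINT u:{0..s}|lborel. carre_du_champ_bound)"
  proof (rule set_integral_mono)
    show "set_integrable lborel {0..s} (\<lambda>u. norm (Gamma_path \<omega> u))"
      using int by (rule set_integrable_norm)
    have "integrable lborel (\<lambda>u. indicator {0..s} u * carre_du_champ_bound)"
      by (intro integrable_mult_left integrable_real_indicator) (auto simp: emeasure_lborel_Icc_eq)
    then show "set_integrable lborel {0..s} (\<lambda>u. carre_du_champ_bound)"
      by (simp add: set_integrable_def)
    show "\<And>u. u \<in> {0..s} \<Longrightarrow> norm (Gamma_path \<omega> u) \<le> carre_du_champ_bound"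
      using abs_Gamma_path_le s by auto
  qed
  also have "\<dots> = carre_du_champ_bound * s" using s by (simp add: set_integral_const)
  finally show ?thesis .
qed

lemma measurable_integral_Gamma_path:
  fixes B :: "'w measure"
  assumes space: "space B = space Q" and s: "0 \<le> s" "s \<le> T"
    and X_sets: "\<And>r x. T - s \<le> r \<Longrightarrow> r \<le> T \<Longrightarrow> X_event r x \<in> sets B"
    and S: "S \<in> sets borel" "S \<subseteq> {0..s}"
  shows "(\<lambda>\<omega>. LINT u:S|lborel. Gamma_path \<omega> u) \<in> borel_measurable B"
proof -
  have "(\<lambda>\<omega>. \<integral>u. indicator S u * Gamma_path \<omega> u \<partial>lborel) \<in> borel_measurable B"
    using measurable_Gamma_path[OF assms] by (intro lborel.borel_measurable_lebesgue_integral) (simp add: split_beta')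
  then show ?thesis by (simp add: set_lebesgue_integral_def)
qed

lemma measurable_Mhat: "0 \<le> s \<Longrightarrow> s \<le> T \<Longrightarrow> Mhat s \<in> borel_measurable (F s)"
  unfolding Mhat_def
  by (intro borel_measurable_diff measurable_compose[OF measurable_X_F]
      measurable_integral_Gamma_path[where B="F s" and s=s and S="{0..s}", OF space_F])
     (auto intro: X_event_in_F)

lemma integrable_Mhat:
  assumes s: "0 \<le> s" "s \<le> T"
  shows "integrable Q (Mhat s)"
proof (rule QQ.integrable_const_bound[where B="ratio_bound\<^sup>2 + carre_du_champ_bound * T"])
  show "Mhat s \<in> borel_measurable Q"
    using measurable_from_subalg[OF subalgebra_F measurable_Mhat] s by blast
  show "AE \<omega> in Q. norm (Mhat s \<omega>) \<le> ratio_bound\<^sup>2 + carre_du_champ_bound * T"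
  proof (rule AE_I2)
    fix \<omega> assume \<omega>: "\<omega> \<in> space Q"
    have "(lr (T - s) (X (T - s) \<omega>))\<^sup>2 \<le> ratio_bound\<^sup>2"
      using likelihood_ratio_bounds[of "T - s"] s by (intro power_mono) auto
    moreover have "\<bar>LINT u:{0..s}|lborel. Gamma_path \<omega> u\<bar> \<le> carre_du_champ_bound * T"
      using abs_integral_Gamma_path_le[OF \<omega> s] mult_left_mono[OF s(2) carre_du_champ_bound_nonneg] by simp
    ultimately show "norm (Mhat s \<omega>) \<le> ratio_bound\<^sup>2 + carre_du_champ_bound * T"
      unfolding Mhat_def real_norm_def abs_le_iff by (smt (verit) zero_le_power2)
  qed
qed

lemma integrable_likelihood_ratio_square: "0 \<le> v \<Longrightarrow> integrable Q (\<lambda>\<omega>. (lr v (X v \<omega>))\<^sup>2)"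
  by (rule QQ.integrable_const_bound[where B="ratio_bound\<^sup>2"])
     (auto intro!: power_mono measurable_compose[OF QQ.measurable_X] simp: likelihood_ratio_bounds)

lemma integrable_integral_Gamma_path:
  assumes st: "0 \<le> s" "s \<le> t" "t \<le> T"
  shows "integrable Q (\<lambda>\<omega>. LINT u:{s<..t}|lborel. Gamma_path \<omega> u)"
proof (rule QQ.integrable_const_bound[where B="2 * carre_du_champ_bound * T"])
  show "(\<lambda>\<omega>. LINT u:{s<..t}|lborel. Gamma_path \<omega> u) \<in> borel_measurable Q"
    using st T_pos by (intro measurable_integral_Gamma_path[OF refl _ order_refl]) (auto intro: QQ.sets_X_event)
  show "AE \<omega> in Q. norm (LINT u:{s<..t}|lborel. Gamma_path \<omega> u) \<le> 2 * carre_du_champ_bound * T"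
  proof (rule AE_I2)
    fix \<omega> assume \<omega>: "\<omega> \<in> space Q"
    have "\<bar>LINT u:{0..t}|lborel. Gamma_path \<omega> u\<bar> \<le> carre_du_champ_bound * T"
         "\<bar>LINT u:{0..s}|lborel. Gamma_path \<omega> u\<bar> \<le> carre_du_champ_bound * T"
      using abs_integral_Gamma_path_le[OF \<omega>, of t] abs_integral_Gamma_path_le[OF \<omega>, of s] st
        mult_left_mono[OF _ carre_du_champ_bound_nonneg, of t T] mult_left_mono[OF _ carre_du_champ_bound_nonneg, of s T]
      by auto
    then show "norm (LINT u:{s<..t}|lborel. Gamma_path \<omega> u) \<le> 2 * carre_du_champ_bound * T"
      using integral_Gamma_path_split[OF \<omega> st] by (simp add: abs_le_iff)
  qed
qed

lemma integral_indicator_X: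
  assumes A: "A \<in> sets Q" and t: "0 \<le> t"
  shows "(\<integral>\<omega>. indicator A \<omega> * h (X t \<omega>) \<partial>Q) = (\<Sum>x\<in>UNIV. h x * QQ.prob (X_event t x \<inter> A))"
proof -
  have sets: "X_event t x \<inter> A \<in> sets Q" for x using A QQ.sets_X_event[OF t] by auto
  have "(\<integral>\<omega>. indicator A \<omega> * h (X t \<omega>) \<partial>Q) = (\<integral>\<omega>. (\<Sum>x\<in>UNIV. h x * indicator (X_event t x \<inter> A) \<omega>) \<partial>Q)"
  proof (rule Bochner_Integration.integral_cong[OF refl])
    fix \<omega> assume "\<omega> \<in> space Q"
    then have "(\<Sum>x\<in>UNIV. h x * indicator (X_event t x \<inter> A) \<omega>)
        = (\<Sum>x\<in>UNIV. (indicator A \<omega> * h x) * (if x = X t \<omega> then 1 else 0))"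
      by (intro sum.cong refl) (auto simp: indicator_def)
    then show "indicator A \<omega> * h (X t \<omega>) = (\<Sum>x\<in>UNIV. h x * indicator (X_event t x \<inter> A) \<omega>)"
      by (simp add: sum_times_delta)
  qed
  also have "\<dots> = (\<Sum>x\<in>UNIV. h x * QQ.prob (X_event t x \<inter> A))"
    using sets by (subst Bochner_Integration.integral_sum)
      (auto simp: QQ.emeasure_finite less_top[symmetric] intro!: integrable_mult_right integrable_real_indicator)
  finally show ?thesis .
qed

lemma integral_indicator_integral_Gamma_path:
  assumes A: "A \<in> sets Q" and st: "0 \<le> s" "s \<le> t" "t \<le> T"
  shows "(\<integral>\<omega>. indicator A \<omega> * (LINT u:{s<..t}|lborel. Gamma_path \<omega> u) \<partial>Q)
       = (LINT u:{s<..t}|lborel. (\<integral>\<omega>. indicator A \<omega> * Gamma_path \<omega> u \<partial>Q))"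
proof -
  interpret pair_sigma_finite Q lborel ..
  define k where "k \<omega> u = indicator A \<omega> * (indicator {s<..t} u * Gamma_path \<omega> u)" for \<omega> u
  have "(\<lambda>z. indicator {s<..t} (snd z) * Gamma_path (fst z) (snd z)) \<in> borel_measurable (Q \<Otimes>\<^sub>M lborel)"
    by (rule measurable_Gamma_path[OF refl _ order_refl]) (use T_pos st in \<open>auto intro: QQ.sets_X_event\<close>)
  moreover have "(\<lambda>z. indicator A (fst z) :: real) \<in> borel_measurable (Q \<Otimes>\<^sub>M lborel)"
    by (rule measurable_compose[OF measurable_fst]) (simp add: A borel_measurable_indicator)
  ultimately have k: "case_prod k \<in> borel_measurable (Q \<Otimes>\<^sub>M lborel)"
    unfolding k_def split_beta' by (rule borel_measurable_times[rotated])
  have "integrable (Q \<Otimes>\<^sub>M lborel) (case_prod k)"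
  proof (rule integrableI_bounded_set[where A="space Q \<times> {0..T}" and B=carre_du_champ_bound])
    show "emeasure (Q \<Otimes>\<^sub>M lborel) (space Q \<times> {0..T}) < \<infinity>"
      by (subst lborel.emeasure_pair_measure_Times) (auto simp: QQ.emeasure_space_1 emeasure_lborel_Icc_eq)
    show "AE z in Q \<Otimes>\<^sub>M lborel. z \<in> space Q \<times> {0..T} \<longrightarrow> norm (case_prod k z) \<le> carre_du_champ_bound"
      using abs_Gamma_path_le carre_du_champ_bound_nonneg by (auto simp: k_def indicator_def split_beta')
    show "AE z in Q \<Otimes>\<^sub>M lborel. z \<notin> space Q \<times> {0..T} \<longrightarrow> case_prod k z = 0"
    proof (rule AE_I2, intro impI)
      fix z :: "'w \<times> real" assume "z \<in> space (Q \<Otimes>\<^sub>M lborel)" "z \<notin> space Q \<times> {0..T}"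
      then have "snd z \<notin> {s<..t}" using st by (auto simp: space_pair_measure)
      then show "case_prod k z = 0" by (simp add: k_def split_beta')
    qed
  qed (auto intro: k)
  then have "(\<integral>\<omega>. (\<integral>u. k \<omega> u \<partial>lborel) \<partial>Q) = (\<integral>u. (\<integral>\<omega>. k \<omega> u \<partial>Q) \<partial>lborel)"
    by (rule Fubini_integral[symmetric])
  moreover have "(\<integral>\<omega>. k \<omega> u \<partial>Q) = indicator {s<..t} u * (\<integral>\<omega>. indicator A \<omega> * Gamma_path \<omega> u \<partial>Q)" for u
    unfolding k_def mult.left_commute[of "indicator A _"] by (rule integral_mult_right_zero)
  ultimately show ?thesis
    unfolding k_def set_lebesgue_integral_def by simp
qed

lemma integral_indicator_integral_Gamma_path_eq:
  fixes W :: "real \<Rightarrow> 's \<Rightarrow> real"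
  assumes A: "A \<in> sets Q" and st: "0 \<le> s" "s \<le> t" "t \<le> T"
    and density: "\<And>v h. T - t \<le> v \<Longrightarrow> v \<le> T - s \<Longrightarrow>
      (\<integral>\<omega>. indicator A \<omega> * h (X v \<omega>) \<partial>Q) = c * (\<Sum>x\<in>UNIV. W v x * h x)"
    and W: "\<And>v x. ((\<lambda>v. W v x) has_real_derivative (- (\<Sum>z\<in>UNIV. W v z * kappa_hat Pm q z x))) (at v)"
  shows "(\<integral>\<omega>. indicator A \<omega> * (LINT u:{s<..t}|lborel. Gamma_path \<omega> u) \<partial>Q)
       = c * (\<Sum>x\<in>UNIV. W (T - t) x * (lr (T - t) x)\<^sup>2) - c * (\<Sum>x\<in>UNIV. W (T - s) x * (lr (T - s) x)\<^sup>2)"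
proof -
  define \<Phi> where "\<Phi> v = (\<Sum>x\<in>UNIV. W v x * (lr v x)\<^sup>2)" for v
  define \<Psi> where "\<Psi> v = (\<Sum>x\<in>UNIV. W v x * \<Gamma> v x)" for v
  have \<Phi>: "(\<Phi> has_real_derivative (- \<Psi> v)) (at v)" for v
    unfolding \<Phi>_def \<Psi>_def by (rule weighted_square_derivative[OF W])
  have \<Psi>: "isCont \<Psi> v" for v
    unfolding \<Psi>_def by (intro continuous_intros DERIV_isCont[OF W] isCont_carre_du_champ)
  have "(\<integral>\<omega>. indicator A \<omega> * (LINT u:{s<..t}|lborel. Gamma_path \<omega> u) \<partial>Q)
      = (LINT u:{s<..t}|lborel. (\<integral>\<omega>. indicator A \<omega> * Gamma_path \<omega> u \<partial>Q))"
    by (rule integral_indicator_integral_Gamma_path[OF A st])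
  also have "\<dots> = (LINT u:{s<..t}|lborel. c * \<Psi> (T - u))"
    using density unfolding \<Psi>_def Gamma_path_def by (intro set_lebesgue_integral_cong) auto
  also have "\<dots> = (LBINT u=s..t. c * \<Psi> (T - u))"
    using st by (simp add: interval_integral_Ioc)
  also have "\<dots> = c * \<Phi> (T - t) - c * \<Phi> (T - s)"
  proof (rule interval_integral_FTC_finite)
    show "continuous_on {min s t..max s t} (\<lambda>u. c * \<Psi> (T - u))"
      by (intro continuous_at_imp_continuous_on ballI continuous_intros isCont_o2[OF _ \<Psi>])
    have "((\<lambda>u. c * \<Phi> (T - u)) has_real_derivative c * (- \<Psi> (T - u) * -1)) (at u)" for u
      by (intro DERIV_cmult DERIV_chain2[OF \<Phi>]) (auto intro!: derivative_eq_intros)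
    then show "((\<lambda>u. c * \<Phi> (T - u)) has_vector_derivative c * \<Psi> (T - u)) (at u within {min s t..max s t})" for u
      by (simp add: has_real_derivative_iff_has_vector_derivative has_vector_derivative_at_within)
  qed
  finally show ?thesis by (simp add: \<Phi>_def)
qed

text \<open>The hypotheses say that on \<open>A\<close> the law of \<open>X v\<close> has density \<open>c W v\<close>, with \<open>W\<close> evolving
  backwards by the reversed rates.\<close>
lemma integral_indicator_Mhat_eq:
  fixes W :: "real \<Rightarrow> 's \<Rightarrow> real"
  assumes A: "A \<in> sets Q" and st: "0 \<le> s" "s \<le> t" "t \<le> T"
    and density: "\<And>v h. T - t \<le> v \<Longrightarrow> v \<le> T - s \<Longrightarrow>
      (\<integral>\<omega>. indicator A \<omega> * h (X v \<omega>) \<partial>Q) = c * (\<Sum>x\<in>UNIV. W v x * h x)"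
    and W: "\<And>v x. ((\<lambda>v. W v x) has_real_derivative (- (\<Sum>z\<in>UNIV. W v z * kappa_hat Pm q z x))) (at v)"
  shows "(\<integral>\<omega>. indicator A \<omega> * Mhat t \<omega> \<partial>Q) = (\<integral>\<omega>. indicator A \<omega> * Mhat s \<omega> \<partial>Q)"
proof -
  let ?sq = "\<lambda>v \<omega>. indicator A \<omega> * (lr v (X v \<omega>))\<^sup>2"
  let ?J = "\<lambda>\<omega>. indicator A \<omega> * (LINT u:{s<..t}|lborel. Gamma_path \<omega> u)"
  have "indicator A \<omega> * Mhat t \<omega> = indicator A \<omega> * Mhat s \<omega> + ?sq (T - t) \<omega> - ?sq (T - s) \<omega> - ?J \<omega>"
    if "\<omega> \<in> space Q" for \<omega>
    using integral_Gamma_path_split[OF that st] unfolding Mhat_def by (simp add: algebra_simps)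
  then have "(\<integral>\<omega>. indicator A \<omega> * Mhat t \<omega> \<partial>Q)
      = (\<integral>\<omega>. indicator A \<omega> * Mhat s \<omega> + ?sq (T - t) \<omega> - ?sq (T - s) \<omega> - ?J \<omega> \<partial>Q)"
    by (rule Bochner_Integration.integral_cong[OF refl])
  also have "\<dots> = (\<integral>\<omega>. indicator A \<omega> * Mhat s \<omega> \<partial>Q) + (\<integral>\<omega>. ?sq (T - t) \<omega> \<partial>Q)
      - (\<integral>\<omega>. ?sq (T - s) \<omega> \<partial>Q) - (\<integral>\<omega>. ?J \<omega> \<partial>Q)"
    using st
    by (simp add: integrable_indicator_mult[OF A] integrable_Mhat integrable_likelihood_ratio_square
        integrable_integral_Gamma_path)
  also have "(\<integral>\<omega>. ?sq (T - t) \<omega> \<partial>Q) = c * (\<Sum>x\<in>UNIV. W (T - t) x * (lr (T - t) x)\<^sup>2)"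
    using st by (intro density) auto
  also have "(\<integral>\<omega>. ?sq (T - s) \<omega> \<partial>Q) = c * (\<Sum>x\<in>UNIV. W (T - s) x * (lr (T - s) x)\<^sup>2)"
    using st by (intro density) auto
  also have "(\<integral>\<omega>. ?J \<omega> \<partial>Q)
      = c * (\<Sum>x\<in>UNIV. W (T - t) x * (lr (T - t) x)\<^sup>2) - c * (\<Sum>x\<in>UNIV. W (T - s) x * (lr (T - s) x)\<^sup>2)"
    by (rule integral_indicator_integral_Gamma_path_eq[OF A st density W])
  finally show ?thesis by simp
qed

lemma integral_indicator_Mhat_space:
  assumes st: "0 \<le> s" "s \<le> t" "t \<le> T"
  shows "(\<integral>\<omega>. indicator (space Q) \<omega> * Mhat t \<omega> \<partial>Q) = (\<integral>\<omega>. indicator (space Q) \<omega> * Mhat s \<omega> \<partial>Q)"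
proof (rule integral_indicator_Mhat_eq[OF sets.top st, where W="\<lambda>v x. q x" and c=1])
  fix v h assume "T - t \<le> v"
  then have v: "0 \<le> v" using st by simp
  have "X_event v x \<inter> space Q = X_event v x" for x by auto
  then show "(\<integral>\<omega>. indicator (space Q) \<omega> * h (X v \<omega>) \<partial>Q) = 1 * (\<Sum>x\<in>UNIV. q x * h x)"
    using QQ.prob_X_stationary[OF v inv] by (simp add: integral_indicator_X[OF sets.top v] mult.commute)
qed (rule stationary_weight_derivative)

lemma integral_indicator_Mhat_cylinder:
  assumes st: "0 \<le> s" "s \<le> t" "t \<le> T"
    and R: "finite R" "R \<noteq> {}" "R \<subseteq> {T - s..T}"
  shows "(\<integral>\<omega>. indicator (QQ.cylinder R f) \<omega> * Mhat t \<omega> \<partial>Q)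
       = (\<integral>\<omega>. indicator (QQ.cylinder R f) \<omega> * Mhat s \<omega> \<partial>Q)"
proof (rule integral_indicator_Mhat_eq[OF _ st, where W="\<lambda>v x. q x * transition_fun Pm (Min R - v) x (f (Min R))"
      and c="QQ.prob (QQ.cylinder R f) / q (f (Min R))"])
  show A: "QQ.cylinder R f \<in> sets Q" using R st by (intro QQ.sets_cylinder) auto
  fix v h assume v: "T - t \<le> v" "v \<le> T - s"
  then have v: "R \<subseteq> {v..}" "0 \<le> v" using R st by auto
  have "(\<integral>\<omega>. indicator (QQ.cylinder R f) \<omega> * h (X v \<omega>) \<partial>Q)
      = (\<Sum>x\<in>UNIV. h x * QQ.prob (X_event v x \<inter> QQ.cylinder R f))"
    by (rule integral_indicator_X[OF A v(2)])
  also have "\<dots> = (\<Sum>x\<in>UNIV. h x * (q x * transition_fun Pm (Min R - v) x (f (Min R)) / q (f (Min R))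
      * QQ.prob (QQ.cylinder R f)))"
    by (intro sum.cong refl) (simp add: QQ.prob_X_inter_cylinder_stationary[OF inv q_pos R(1,2) v])
  finally show "(\<integral>\<omega>. indicator (QQ.cylinder R f) \<omega> * h (X v \<omega>) \<partial>Q)
      = QQ.prob (QQ.cylinder R f) / q (f (Min R)) * (\<Sum>x\<in>UNIV. q x * transition_fun Pm (Min R - v) x (f (Min R)) * h x)"
    by (simp add: sum_distrib_left mult_ac)
qed (rule reversed_weight_derivative)

definition cylinder_generators :: "real \<Rightarrow> 'w set set" where
  "cylinder_generators s = {QQ.cylinder R f | R f. finite R \<and> R \<subseteq> {T - s..T}} \<union> {{}}"

lemma cylinder_generators_subset: "cylinder_generators s \<subseteq> Pow (space Q)"
  by (auto simp: cylinder_generators_def QQ.cylinder_def)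

lemma Int_stable_cylinder_generators: "Int_stable (cylinder_generators s)"
proof (rule Int_stableI)
  fix A B assume "A \<in> cylinder_generators s" "B \<in> cylinder_generators s"
  then consider "A = {} \<or> B = {}"
    | R f R' f' where "A = QQ.cylinder R f" "B = QQ.cylinder R' f'"
        "finite R" "R \<subseteq> {T - s..T}" "finite R'" "R' \<subseteq> {T - s..T}"
    by (auto simp: cylinder_generators_def)
  then show "A \<inter> B \<in> cylinder_generators s"
  proof cases
    case 2
    show ?thesis
    proof (cases "\<forall>r\<in>R \<inter> R'. f r = f' r")
      case True
      then have "A \<inter> B = QQ.cylinder (R \<union> R') (\<lambda>r. if r \<in> R then f r else f' r)"
        using 2 by (auto simp: QQ.cylinder_def)
      then show ?thesis using 2 by (auto simp: cylinder_generators_def)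
    next
      case False
      then have "A \<inter> B = {}" using 2 by (auto simp: QQ.cylinder_def)
      then show ?thesis by (simp add: cylinder_generators_def)
    qed
  qed (auto simp: cylinder_generators_def)
qed

lemma sigma_sets_cylinder_generators:
  assumes "0 \<le> s" "s \<le> T"
  shows "sigma_sets (space Q) (cylinder_generators s) = sets (F s)"
  unfolding sets_F
proof (rule sigma_sets_eqI)
  fix A assume "A \<in> cylinder_generators s"
  then consider "A = {}" | R f where "A = QQ.cylinder R f" "finite R" "R \<subseteq> {T - s..T}"
    by (auto simp: cylinder_generators_def)
  then show "A \<in> sigma_sets (space Q) (reversed_generators s)"
  proof cases
    case 2
    then have "A = {\<omega> \<in> space Q. \<forall>r\<in>R. X r \<omega> = f r}" by (simp add: QQ.cylinder_def)
    also have "\<dots> \<in> sigma_sets (space Q) (reversed_generators s)"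
      using 2 by (intro sigma_sets_Collect_finite_All reversed_generators_subset X_event_in_reversed_generators) auto
    finally show ?thesis .
  qed (simp add: sigma_sets.Empty)
next
  fix B assume "B \<in> reversed_generators s"
  then obtain u y where "B = X_event (T - u) y" "0 \<le> u" "u \<le> s"
    by (auto simp: reversed_generators_def)
  then have "B \<in> cylinder_generators s"
    unfolding cylinder_generators_def using QQ.cylinder_singleton[of "T - u" "\<lambda>_. y"] by force
  then show "B \<in> sigma_sets (space Q) (cylinder_generators s)" by (rule sigma_sets.Basic)
qed

lemma set_integral_Mhat:
  assumes st: "0 \<le> s" "s \<le> t" "t \<le> T" and A: "A \<in> sets (F s)"
  shows "(\<integral>\<omega>\<in>A. Mhat t \<omega> \<partial>Q) = (\<integral>\<omega>\<in>A. Mhat s \<omega> \<partial>Q)"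
proof (rule set_integral_eq_on_sigma_sets)
  show "sigma_sets (space Q) (cylinder_generators s) \<subseteq> sets Q"
    using sigma_sets_cylinder_generators subalgebra_F st by (simp add: subalgebra_def)
  show "A \<in> sigma_sets (space Q) (cylinder_generators s)"
    using A sigma_sets_cylinder_generators st by simp
  show "(\<integral>\<omega>\<in>space Q. Mhat t \<omega> \<partial>Q) = (\<integral>\<omega>\<in>space Q. Mhat s \<omega> \<partial>Q)"
    using integral_indicator_Mhat_space[OF st] by (simp add: set_lebesgue_integral_def)
  fix C assume "C \<in> cylinder_generators s"
  then consider "C = {}" | R f where "C = QQ.cylinder R f" "finite R" "R \<subseteq> {T - s..T}"
    by (auto simp: cylinder_generators_def)
  then show "(\<integral>\<omega>\<in>C. Mhat t \<omega> \<partial>Q) = (\<integral>\<omega>\<in>C. Mhat s \<omega> \<partial>Q)"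
  proof cases
    case 2
    then show ?thesis
      using integral_indicator_Mhat_cylinder[OF st 2(2) _ 2(3), of f] integral_indicator_Mhat_space[OF st]
      by (cases "R = {}") (auto simp: set_lebesgue_integral_def QQ.cylinder_def)
  qed (simp add: set_lebesgue_integral_def)
qed (use st in \<open>auto intro: Int_stable_cylinder_generators integrable_Mhat simp: cylinder_generators_subset\<close>)

lemma martingale_Mhat: "martingale Q F {0..T} Mhat"
  unfolding martingale_def
proof (intro conjI ballI impI)
  fix s t assume s: "s \<in> {0..T}" and t: "t \<in> {0..T}" and "s \<le> t"
  interpret finite_measure_subalgebra Q "F s"
    using s subalgebra_F by unfold_locales auto
  show "AE \<omega> in Q. real_cond_exp Q (F s) (Mhat t) \<omega> = Mhat s \<omega>"
    using s t \<open>s \<le> t\<close>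
    by (intro real_cond_exp_charact set_integral_Mhat integrable_Mhat measurable_Mhat) auto
qed (auto intro: subalgebra_F measurable_Mhat integrable_Mhat simp: F_mono)

lemma Mhat_eq:
  assumes "s \<in> {0..T}"
  shows "(\<lambda>\<omega>. (lratio P Z N q (T - s) (X (T - s) \<omega>))\<^sup>2
          - (LINT u:{0..s}|lborel.
              (let x = X (T - u) \<omega> in
                \<Sum>y\<in>UNIV - {x}. kappa_hat Pm q x y * (lratio P Z N q (T - u) y - lratio P Z N q (T - u) x)\<^sup>2)))
       = Mhat s"
proof
  fix \<omega>
  have "(let x = X (T - u) \<omega> in
          \<Sum>y\<in>UNIV - {x}. kappa_hat Pm q x y * (lratio P Z N q (T - u) y - lratio P Z N q (T - u) x)\<^sup>2)
      = Gamma_path \<omega> u" if "u \<in> {0..s}" for u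
    using that assms by (simp add: Let_def Gamma_path_def carre_du_champ_def lratio_eq)
  then have "(LINT u:{0..s}|lborel.
              (let x = X (T - u) \<omega> in
                \<Sum>y\<in>UNIV - {x}. kappa_hat Pm q x y * (lratio P Z N q (T - u) y - lratio P Z N q (T - u) x)\<^sup>2))
      = (LINT u:{0..s}|lborel. Gamma_path \<omega> u)"
    by (intro set_lebesgue_integral_cong) simp_all
  then show "(lratio P Z N q (T - s) (X (T - s) \<omega>))\<^sup>2
          - (LINT u:{0..s}|lborel.
              (let x = X (T - u) \<omega> in
                \<Sum>y\<in>UNIV - {x}. kappa_hat Pm q x y * (lratio P Z N q (T - u) y - lratio P Z N q (T - u) x)\<^sup>2))
       = Mhat s \<omega>"
    using assms unfolding Mhat_def by (simp add: lratio_eq)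
qed

end

lemma martingale_cong:
  assumes "\<And>s. s \<in> I \<Longrightarrow> Y s = Y' s" and "martingale M F I Y'"
  shows "martingale M F I Y"
  using assms(2) unfolding martingale_def by (simp add: assms(1))

theorem proposition6p1:
  fixes Pm :: "'s::finite \<Rightarrow> 's \<Rightarrow> real"
    and q p0 :: "'s \<Rightarrow> real"
    and P Q :: "'w measure"
    and Z :: "nat \<Rightarrow> 'w \<Rightarrow> 's"
    and N :: "real \<Rightarrow> 'w \<Rightarrow> nat"
    and T :: real
  assumes stoch: "stochastic_matrix Pm"
    and irred: "irreducible_matrix Pm"
    and inv: "invariant_distribution Pm q"
    and p0_dist: "prob_vector p0" and p0_pos: "\<forall>x. 0 < p0 x"
    and P_setting: "uniformized_chain_setting P Z N p0 Pm"
    and Q_setting: "uniformized_chain_setting Q Z N q Pm"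
    and T_pos: "0 < T"
  shows "martingale Q
           (natural_filtration Q (\<lambda>s. ctmc Z N (T - s)))
           {0..T}
           (\<lambda>s \<omega>. (lratio P Z N q (T - s) (ctmc Z N (T - s) \<omega>))\<^sup>2
                 - (LINT u:{0..s}|lborel.
                      (let x = ctmc Z N (T - u) \<omega> in
                        \<Sum>y\<in>UNIV - {x}. kappa_hat Pm q x y
                            * (lratio P Z N q (T - u) y - lratio P Z N q (T - u) x)\<^sup>2)))"
proof -
  \<comment> \<open>Irreducibility is only needed for \<open>q > 0\<close>; nothing is required of \<open>p0\<close> beyond being the
      initial law of the chain under \<open>P\<close>.\<close>
  interpret reversal Pm q p0 P Q Z N T
    using stoch inv invariant_distribution_pos[OF stoch irred inv] P_setting Q_setting T_pos
    by unfold_locales auto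
  show ?thesis
    by (rule martingale_cong[OF Mhat_eq martingale_Mhat])
qed

end
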